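(* There exists a polynomial-time algorithm which, given an instance of SMG with asymmetric preferences, outputs a stable matching if the instance admits one, and otherwise correctly reports that no stable matching exists.
   Context: An instance of SMG consists of a set $B$ of $n$ men, a set $C$ of $n$ women, for each man $b\in B$ a strict total order $\succ_b$ on all of $C$, and for each woman $c\in C$ an arbitrary set $\mathcal{R}_c\subseteq B\times B$ (interpreted as: $(b,b')\in\mathcal{R}_c$ means $c$ prefers $b$ at least as much as $b'$; no transitivity or other property is assumed). Given a perfect matching $N$ between $B$ and $C$, a pair $(b,c)$ is blocking if $(b,c)\notin N$, $c\succ_b N(b)$, and $(N(c),b)\notin\mathcal{R}_c$. A stable matching is a perfect matching between $B$ and $C$ with no blocking pair. The instance has asymmetric preferences if for every $b_1,b_2\in B$ and $c\in C$, at most one of $(b_1,b_2)\in\mathcal{R}_c$ and $(b_2,b_1)\in\mathcal{R}_c$ holds. *)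

theory Defs
  imports Main
begin

text \<open>Men and women are both indexed by 0..<n.
  pref b c c' means c is strictly preferred to c' by man b (c \<succ>_b c').
  R c b b' means (b,b') \<in> R_c, i.e. woman c likes b at least as much as b'.\<close>

definition smg_instance :: "nat \<Rightarrow> (nat \<Rightarrow> nat \<Rightarrow> nat \<Rightarrow> bool) \<Rightarrow> (nat \<Rightarrow> nat \<Rightarrow> nat \<Rightarrow> bool) \<Rightarrow> bool" where
  "smg_instance n pref R \<longleftrightarrow>
     (\<forall>b<n. (\<forall>c<n. \<not> pref b c c)
          \<and> (\<forall>c1<n. \<forall>c2<n. \<forall>c3<n. pref b c1 c2 \<longrightarrow> pref b c2 c3 \<longrightarrow> pref b c1 c3)
          \<and> (\<forall>c1<n. \<forall>c2<n. c1 \<noteq> c2 \<longrightarrow> pref b c1 c2 \<or> pref b c2 c1))"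

definition asymmetric_prefs :: "nat \<Rightarrow> (nat \<Rightarrow> nat \<Rightarrow> nat \<Rightarrow> bool) \<Rightarrow> bool" where
  "asymmetric_prefs n R \<longleftrightarrow> (\<forall>b1<n. \<forall>b2<n. \<forall>c<n. \<not> (R c b1 b2 \<and> R c b2 b1))"

text \<open>A perfect matching is a list N of length n with N!b the woman matched to man b.\<close>

definition perfect_matching :: "nat \<Rightarrow> nat list \<Rightarrow> bool" where
  "perfect_matching n N \<longleftrightarrow> length N = n \<and> distinct N \<and> set N = {0..<n}"

definition partner_of :: "nat list \<Rightarrow> nat \<Rightarrow> nat" where
  "partner_of N c = (THE b. b < length N \<and> N ! b = c)"

definition blocking_pair :: "nat \<Rightarrow> (nat \<Rightarrow> nat \<Rightarrow> nat \<Rightarrow> bool) \<Rightarrow> (nat \<Rightarrow> nat \<Rightarrow> nat \<Rightarrow> bool)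
    \<Rightarrow> nat list \<Rightarrow> nat \<Rightarrow> nat \<Rightarrow> bool" where
  "blocking_pair n pref R N b c \<longleftrightarrow>
     b < n \<and> c < n \<and> N ! b \<noteq> c \<and> pref b c (N ! b) \<and> \<not> R c (partner_of N c) b"

definition stable_matching :: "nat \<Rightarrow> (nat \<Rightarrow> nat \<Rightarrow> nat \<Rightarrow> bool) \<Rightarrow> (nat \<Rightarrow> nat \<Rightarrow> nat \<Rightarrow> bool)
    \<Rightarrow> nat list \<Rightarrow> bool" where
  "stable_matching n pref R N \<longleftrightarrow>
     perfect_matching n N \<and> (\<nexists>b c. blocking_pair n pref R N b c)"

definition bit :: "bool \<Rightarrow> nat" where "bit P = (if P then 1 else 0)"

definition encode_smg :: "nat \<Rightarrow> (nat \<Rightarrow> nat \<Rightarrow> nat \<Rightarrow> bool) \<Rightarrow> (nat \<Rightarrow> nat \<Rightarrow> nat \<Rightarrow> bool) \<Rightarrow> nat list" where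
  "encode_smg n pref R =
     n # [bit (pref b c c'). b \<leftarrow> [0..<n], c \<leftarrow> [0..<n], c' \<leftarrow> [0..<n]]
       @ [bit (R c b b'). c \<leftarrow> [0..<n], b \<leftarrow> [0..<n], b' \<leftarrow> [0..<n]]"

definition correct_output :: "nat \<Rightarrow> (nat \<Rightarrow> nat \<Rightarrow> nat \<Rightarrow> bool) \<Rightarrow> (nat \<Rightarrow> nat \<Rightarrow> nat \<Rightarrow> bool)
    \<Rightarrow> nat list \<Rightarrow> bool" where
  "correct_output n pref R out \<longleftrightarrow>
     (\<exists>N. out = 1 # N \<and> stable_matching n pref R N)
     \<or> (out = [0] \<and> (\<nexists>N. stable_matching n pref R N))"

datatype instr =
    LoadC nat nat
  | Add nat nat nat
  | Sub nat nat nat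
  | LoadI nat nat
  | StoreI nat nat
  | Jz nat nat
  | Halt

type_synonym config = "nat \<times> (nat \<Rightarrow> nat)"

definition halted :: "instr list \<Rightarrow> config \<Rightarrow> bool" where
  "halted prog cf \<longleftrightarrow> fst cf \<ge> length prog \<or> prog ! fst cf = Halt"

fun exec :: "instr \<Rightarrow> config \<Rightarrow> config" where
  "exec (LoadC r k) (pc, m) = (Suc pc, m(r := k))"
| "exec (Add r a b) (pc, m) = (Suc pc, m(r := m a + m b))"
| "exec (Sub r a b) (pc, m) = (Suc pc, m(r := m a - m b))"
| "exec (LoadI r a) (pc, m) = (Suc pc, m(r := m (m a)))"
| "exec (StoreI r a) (pc, m) = (Suc pc, m(m r := m a))"
| "exec (Jz r l) (pc, m) = (if m r = 0 then l else Suc pc, m)"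
| "exec Halt (pc, m) = (pc, m)"

definition step :: "instr list \<Rightarrow> config \<Rightarrow> config" where
  "step prog cf = (if halted prog cf then cf else exec (prog ! fst cf) cf)"

definition run :: "instr list \<Rightarrow> nat \<Rightarrow> config \<Rightarrow> config" where
  "run prog t cf = (step prog ^^ t) cf"

definition init_config :: "nat list \<Rightarrow> config" where
  "init_config xs = (0, \<lambda>i. if i = 0 then length xs else if i \<le> length xs then xs ! (i - 1) else 0)"

definition output_of :: "config \<Rightarrow> nat list" where
  "output_of cf = map (\<lambda>i. snd cf (Suc i)) [0..<snd cf 0]"

end

theory Submission
  imports Defs
begin

text \<open>The algorithm maintains a relation D of pairs (b, c) that occur in no stable matching.
  If t is man b's favourite woman outside D, then in every stable matching b gets a woman no
  better than t, so every woman c whom b likes at least as much as t is matched to a man x with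
  (x, b) in R_c, or (b, c) would block; every other pair (x, c) can be added to D. Adding pairs
  for all men is repeated until nothing changes, which takes at most n * n rounds. If some man
  then has all women deleted, there is no stable matching. Otherwise each man is assigned his
  favourite remaining woman: two men with the same favourite c would each be kept only if c
  liked the other at least as much as him, contradicting asymmetry, so this is a perfect
  matching, and the fixpoint condition rules out blocking pairs. The algorithm is written as a
  structured program for the RAM and verified in a Hoare logic that also bounds the running
  time, which is O(L^5) on inputs of length L.\<close>

section \<open>Iterated elimination of pairs\<close>

lemma iterate_reaches_fixpoint:
  fixes f :: "'a::order \<Rightarrow> 'a" and \<mu> :: "'a \<Rightarrow> nat"
  assumes inv: "I x0" "\<And>x. I x \<Longrightarrow> I (f x)"
    and inflationary: "\<And>x. I x \<Longrightarrow> x \<le> f x"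
    and strict: "\<And>x y. I x \<Longrightarrow> I y \<Longrightarrow> x < y \<Longrightarrow> \<mu> x < \<mu> y"
    and bounded: "\<And>x. \<mu> x \<le> N"
  shows "f ((f ^^ N) x0) = (f ^^ N) x0"
proof -
  have I_iter: "I ((f ^^ k) x0)" for k
    by (induction k) (simp_all add: inv)
  have progress: "f ((f ^^ k) x0) = (f ^^ k) x0 \<or> k \<le> \<mu> ((f ^^ k) x0)" for k
  proof (induction k)
    case (Suc k)
    let ?x = "(f ^^ k) x0"
    show ?case
    proof (cases "f ?x = ?x")
      case False
      then have "?x < f ?x" using inflationary[OF I_iter] by (simp add: order_less_le)
      then have "\<mu> ?x < \<mu> (f ?x)" using strict I_iter inv(2) by blast
      with Suc.IH False show ?thesis by simp
    qed simp
  qed simp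
  show ?thesis
  proof (rule ccontr)
    let ?x = "(f ^^ N) x0"
    assume "f ?x \<noteq> ?x"
    then have "?x < f ?x" using inflationary[OF I_iter] by (simp add: order_less_le)
    then have "\<mu> ?x < \<mu> (f ?x)" using strict I_iter inv(2) by blast
    moreover have "N \<le> \<mu> ?x" using progress \<open>f ?x \<noteq> ?x\<close> by blast
    ultimately show False using bounded[of "f ?x"] by simp
  qed
qed

text \<open>A deletion relation D x y records that man x cannot be matched to woman y in any stable
  matching. The value best_choice pref D b k is 0 if man b has deleted every woman below k, and
  otherwise 1 + his favourite woman below k among those not deleted.\<close>

definition choice_step :: "(nat \<Rightarrow> nat \<Rightarrow> nat \<Rightarrow> bool) \<Rightarrow> (nat \<Rightarrow> nat \<Rightarrow> bool) \<Rightarrow> nat \<Rightarrow> nat \<Rightarrow> nat \<Rightarrow> nat" where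
  "choice_step pref D b cur c = (if \<not> D b c \<and> (cur = 0 \<or> pref b c (cur - 1)) then Suc c else cur)"

definition best_choice :: "(nat \<Rightarrow> nat \<Rightarrow> nat \<Rightarrow> bool) \<Rightarrow> (nat \<Rightarrow> nat \<Rightarrow> bool) \<Rightarrow> nat \<Rightarrow> nat \<Rightarrow> nat" where
  "best_choice pref D b k = foldl (choice_step pref D b) 0 [0..<k]"

definition best_among :: "(nat \<Rightarrow> nat \<Rightarrow> nat \<Rightarrow> bool) \<Rightarrow> (nat \<Rightarrow> nat \<Rightarrow> bool) \<Rightarrow> nat \<Rightarrow> nat \<Rightarrow> nat \<Rightarrow> bool" where
  "best_among pref D b k t \<longleftrightarrow> t < k \<and> \<not> D b t \<and> (\<forall>c<k. \<not> D b c \<longrightarrow> c \<noteq> t \<longrightarrow> pref b t c)"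

definition above_best :: "(nat \<Rightarrow> nat \<Rightarrow> nat \<Rightarrow> bool) \<Rightarrow> nat \<Rightarrow> nat \<Rightarrow> nat \<Rightarrow> bool" where
  "above_best pref b t c \<longleftrightarrow> t = 0 \<or> c = t - 1 \<or> pref b c (t - 1)"

definition eliminate :: "nat \<Rightarrow> (nat \<Rightarrow> nat \<Rightarrow> nat \<Rightarrow> bool) \<Rightarrow> (nat \<Rightarrow> nat \<Rightarrow> nat \<Rightarrow> bool)
    \<Rightarrow> (nat \<Rightarrow> nat \<Rightarrow> bool) \<Rightarrow> nat \<Rightarrow> nat \<Rightarrow> nat \<Rightarrow> bool" where
  "eliminate n pref R D b = (\<lambda>x y. D x y \<or>
     (x < n \<and> y < n \<and> x \<noteq> b \<and> above_best pref b (best_choice pref D b n) y \<and> \<not> R y x b))"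

definition elim_round :: "nat \<Rightarrow> (nat \<Rightarrow> nat \<Rightarrow> nat \<Rightarrow> bool) \<Rightarrow> (nat \<Rightarrow> nat \<Rightarrow> nat \<Rightarrow> bool)
    \<Rightarrow> (nat \<Rightarrow> nat \<Rightarrow> bool) \<Rightarrow> nat \<Rightarrow> nat \<Rightarrow> bool" where
  "elim_round n pref R D = foldl (eliminate n pref R) D [0..<n]"

definition eliminated :: "nat \<Rightarrow> (nat \<Rightarrow> nat \<Rightarrow> nat \<Rightarrow> bool) \<Rightarrow> (nat \<Rightarrow> nat \<Rightarrow> nat \<Rightarrow> bool)
    \<Rightarrow> nat \<Rightarrow> nat \<Rightarrow> bool" where
  "eliminated n pref R = (elim_round n pref R ^^ (n * n)) (\<lambda>_ _. False)"

definition choice_output :: "nat \<Rightarrow> (nat \<Rightarrow> nat \<Rightarrow> nat \<Rightarrow> bool) \<Rightarrow> (nat \<Rightarrow> nat \<Rightarrow> bool) \<Rightarrow> nat list" where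
  "choice_output n pref D = (if \<exists>b<n. best_choice pref D b n = 0 then [0]
     else 1 # map (\<lambda>b. best_choice pref D b n - 1) [0..<n])"

lemma best_choice_0 [simp]: "best_choice pref D b 0 = 0"
  by (simp add: best_choice_def)

lemma best_choice_Suc: "best_choice pref D b (Suc k) = choice_step pref D b (best_choice pref D b k) k"
  by (simp add: best_choice_def)

lemma best_choice_le: "best_choice pref D b k \<le> k"
  by (induction k) (auto simp: best_choice_Suc choice_step_def)

lemma best_among_Suc_deleted: "best_among pref D b k t \<Longrightarrow> D b k \<Longrightarrow> best_among pref D b (Suc k) t"
  by (auto simp: best_among_def less_Suc_eq)

lemma best_among_Suc_first: "\<forall>c<k. D b c \<Longrightarrow> \<not> D b k \<Longrightarrow> best_among pref D b (Suc k) k"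
  by (auto simp: best_among_def less_Suc_eq)

lemma eliminate_mono: "D \<le> eliminate n pref R D b"
  by (simp add: eliminate_def le_fun_def)

lemma foldl_eliminate_mono: "D \<le> foldl (eliminate n pref R) D bs"
  by (induction bs arbitrary: D) (simp, metis eliminate_mono foldl_Cons order_trans)

lemma elim_round_fixed:
  assumes "elim_round n pref R D = D" "b < n"
  shows "eliminate n pref R D b = D"
proof -
  have "foldl (eliminate n pref R) D bs = D \<Longrightarrow> b \<in> set bs \<Longrightarrow> eliminate n pref R D b = D" for bs
  proof (induction bs arbitrary: D)
    case (Cons b0 bs)
    have "eliminate n pref R D b0 \<le> D"
      using foldl_eliminate_mono[of "eliminate n pref R D b0" n pref R bs] Cons.prems(1) by simp
    then have "eliminate n pref R D b0 = D" using eliminate_mono[of D] by (simp add: order_antisym)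
    with Cons show ?case by (cases "b = b0") auto
  qed simp
  with assms show ?thesis unfolding elim_round_def by simp
qed

lemma elim_round_eliminated: "elim_round n pref R (eliminated n pref R) = eliminated n pref R"
proof -
  define in_square where "in_square D \<longleftrightarrow> (\<forall>x y. D x y \<longrightarrow> x < n \<and> y < n)" for D :: "nat \<Rightarrow> nat \<Rightarrow> bool"
  define weight where "weight D = card {(x, y). x < n \<and> y < n \<and> D x y}" for D :: "nat \<Rightarrow> nat \<Rightarrow> bool"
  have square_finite: "finite {(x, y). x < n \<and> y < n \<and> D x y}" for D :: "nat \<Rightarrow> nat \<Rightarrow> bool"
    by (rule finite_subset[of _ "{..<n} \<times> {..<n}"]) blast+
  have in_square_eliminate: "in_square (eliminate n pref R D b)" if "in_square D" for D b
    using that unfolding in_square_def eliminate_def by blast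
  have in_square_round: "in_square (foldl (eliminate n pref R) D bs)" if "in_square D" for D bs
    using that by (induction bs arbitrary: D) (simp_all add: in_square_eliminate)
  have weight_less: "weight D < weight D'" if "in_square D'" "D < D'" for D D'
  proof -
    obtain x y where "D' x y" "\<not> D x y" using \<open>D < D'\<close> by (auto simp: less_fun_def le_fun_def)
    then have "{(x, y). x < n \<and> y < n \<and> D x y} \<subset> {(x, y). x < n \<and> y < n \<and> D' x y}"
      using that by (auto simp: in_square_def less_fun_def le_fun_def)
    then show ?thesis unfolding weight_def by (intro psubset_card_mono square_finite)
  qed
  have weight_le: "weight D \<le> n * n" for D
  proof -
    have "{(x, y). x < n \<and> y < n \<and> D x y} \<subseteq> {..<n} \<times> {..<n}" by blast
    then have "weight D \<le> card ({..<n} \<times> {..<n})"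
      unfolding weight_def by (intro card_mono) simp_all
    then show ?thesis by (simp add: card_cartesian_product)
  qed
  show ?thesis unfolding eliminated_def
  proof (rule iterate_reaches_fixpoint[where I = in_square and \<mu> = weight])
    show "in_square (\<lambda>_ _. False)" by (simp add: in_square_def)
  qed (simp_all add: in_square_round elim_round_def foldl_eliminate_mono weight_less weight_le)
qed

lemma partner_of_nth: "distinct N \<Longrightarrow> x < length N \<Longrightarrow> partner_of N (N ! x) = x"
  unfolding partner_of_def by (rule the_equality) (auto simp: nth_eq_iff_index_eq)

lemma stable_matchingD:
  assumes "stable_matching n pref R N"
  shows "length N = n" "distinct N" "\<And>b. b < n \<Longrightarrow> N ! b < n" "\<And>b c. \<not> blocking_pair n pref R N b c"
  using assms nth_mem[of _ N] unfolding stable_matching_def perfect_matching_def by auto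

locale smg_asym =
  fixes n :: nat and pref :: "nat \<Rightarrow> nat \<Rightarrow> nat \<Rightarrow> bool" and R :: "nat \<Rightarrow> nat \<Rightarrow> nat \<Rightarrow> bool"
  assumes smg: "smg_instance n pref R" and asym: "asymmetric_prefs n R"
begin

lemma pref_irrefl: "b < n \<Longrightarrow> c < n \<Longrightarrow> \<not> pref b c c"
  using smg unfolding smg_instance_def by blast

lemma pref_trans: "b < n \<Longrightarrow> c1 < n \<Longrightarrow> c2 < n \<Longrightarrow> c3 < n \<Longrightarrow> pref b c1 c2 \<Longrightarrow> pref b c2 c3 \<Longrightarrow> pref b c1 c3"
  using smg unfolding smg_instance_def by blast

lemma pref_total: "b < n \<Longrightarrow> c1 < n \<Longrightarrow> c2 < n \<Longrightarrow> c1 \<noteq> c2 \<Longrightarrow> pref b c1 c2 \<or> pref b c2 c1"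
  using smg unfolding smg_instance_def by blast

lemma R_asym: "b1 < n \<Longrightarrow> b2 < n \<Longrightarrow> c < n \<Longrightarrow> R c b1 b2 \<Longrightarrow> \<not> R c b2 b1"
  using asym unfolding asymmetric_prefs_def by blast

lemma best_among_Suc_better:
  assumes "best_among pref D b k t" "b < n" "k < n" "\<not> D b k" "pref b k t"
  shows "best_among pref D b (Suc k) k"
  using assms pref_trans[OF \<open>b < n\<close> \<open>k < n\<close>, of t] by (auto simp: best_among_def less_Suc_eq)

lemma best_among_Suc_worse:
  assumes "best_among pref D b k t" "b < n" "k < n" "\<not> pref b k t"
  shows "best_among pref D b (Suc k) t"
  using assms pref_total[OF \<open>b < n\<close> \<open>k < n\<close>, of t] by (auto simp: best_among_def less_Suc_eq)

lemma best_choice_correct: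
  assumes "b < n" "k \<le> n"
  shows "(best_choice pref D b k = 0 \<longleftrightarrow> (\<forall>c<k. D b c))
    \<and> (best_choice pref D b k \<noteq> 0 \<longrightarrow> best_among pref D b k (best_choice pref D b k - 1))"
  using assms(2)
proof (induction k)
  case (Suc k)
  let ?t = "best_choice pref D b k"
  have IH: "?t = 0 \<longleftrightarrow> (\<forall>c<k. D b c)" "?t \<noteq> 0 \<Longrightarrow> best_among pref D b k (?t - 1)"
    using Suc by auto
  have "k < n" using Suc.prems by simp
  consider "D b k" | "\<not> D b k" "?t = 0" | "\<not> D b k" "?t \<noteq> 0" "pref b k (?t - 1)"
    | "?t \<noteq> 0" "\<not> pref b k (?t - 1)" by blast
  then show ?case
  proof cases
    case 1 then show ?thesis using IH best_among_Suc_deleted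
      by (auto simp: best_choice_Suc choice_step_def less_Suc_eq)
  next
    case 2 then show ?thesis using IH best_among_Suc_first
      by (auto simp: best_choice_Suc choice_step_def)
  next
    case 3 then show ?thesis using IH best_among_Suc_better[OF _ \<open>b < n\<close> \<open>k < n\<close>]
      by (auto simp: best_choice_Suc choice_step_def)
  next
    case 4 then show ?thesis using IH best_among_Suc_worse[OF _ \<open>b < n\<close> \<open>k < n\<close>]
      by (auto simp: best_choice_Suc choice_step_def best_among_def less_Suc_eq)
  qed
qed simp

lemma best_choice_eq_0_iff: "b < n \<Longrightarrow> best_choice pref D b n = 0 \<longleftrightarrow> (\<forall>c<n. D b c)"
  using best_choice_correct[of b n D] by simp

lemma best_choice_best:
  "b < n \<Longrightarrow> best_choice pref D b n \<noteq> 0 \<Longrightarrow> best_among pref D b n (best_choice pref D b n - 1)"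
  using best_choice_correct[of b n D] by blast

definition sound_deletions :: "(nat \<Rightarrow> nat \<Rightarrow> bool) \<Rightarrow> bool" where
  "sound_deletions D \<longleftrightarrow> (\<forall>N. stable_matching n pref R N \<longrightarrow> (\<forall>b<n. \<not> D b (N ! b)))"

lemma stable_partner_above_best:
  assumes st: "stable_matching n pref R N" and sound: "sound_deletions D"
    and b: "b < n" and y: "y < n" "y \<noteq> N ! b" "above_best pref b (best_choice pref D b n) y"
  shows "R y (partner_of N y) b"
proof -
  note N = stable_matchingD[OF st]
  have not_del: "\<not> D b (N ! b)" using sound st b unfolding sound_deletions_def by blast
  then have nz: "best_choice pref D b n \<noteq> 0" using best_choice_eq_0_iff[OF b] N(3)[OF b] by blast
  define t where "t = best_choice pref D b n - 1"
  have t: "best_among pref D b n t" using best_choice_best[OF b nz] unfolding t_def .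
  have "y = t \<or> pref b y t" using y(3) nz unfolding above_best_def t_def by auto
  moreover have "N ! b = t \<or> pref b t (N ! b)" using t not_del N(3)[OF b] unfolding best_among_def by blast
  ultimately have "pref b y (N ! b)"
    using y pref_trans[OF b y(1) _ N(3)[OF b], of t] t unfolding best_among_def by auto
  then show ?thesis using N(4)[of b y] b y unfolding blocking_pair_def by auto
qed

lemma sound_eliminate:
  assumes sound: "sound_deletions D" and "b < n"
  shows "sound_deletions (eliminate n pref R D b)"
  unfolding sound_deletions_def
proof (intro allI impI notI)
  fix N b' assume st: "stable_matching n pref R N" and b': "b' < n" and del: "eliminate n pref R D b b' (N ! b')"
  note N = stable_matchingD[OF st]
  have "\<not> D b' (N ! b')" using sound st b' unfolding sound_deletions_def by blast
  then have h: "b' \<noteq> b" "above_best pref b (best_choice pref D b n) (N ! b')" "\<not> R (N ! b') b' b"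
    using del unfolding eliminate_def by auto
  have "N ! b' \<noteq> N ! b" using h(1) N(1,2) b' \<open>b < n\<close> nth_eq_iff_index_eq by metis
  then have "R (N ! b') (partner_of N (N ! b')) b"
    using stable_partner_above_best[OF st sound \<open>b < n\<close> N(3)[OF b']] h(2) by blast
  then show False using h(3) partner_of_nth[OF N(2)] N(1) b' by simp
qed

lemma sound_eliminated: "sound_deletions (eliminated n pref R)"
proof -
  have round: "sound_deletions (elim_round n pref R D)" if "sound_deletions D" for D
  proof -
    have "\<forall>b\<in>set bs. b < n \<Longrightarrow> sound_deletions (foldl (eliminate n pref R) D bs)" for bs
      using that by (induction bs arbitrary: D) (auto intro: sound_eliminate)
    then show ?thesis unfolding elim_round_def by simp
  qed
  have "sound_deletions (\<lambda>_ _. False)" by (simp add: sound_deletions_def)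
  then have "sound_deletions ((elim_round n pref R ^^ k) (\<lambda>_ _. False))" for k
    by (induction k) (simp_all add: round)
  then show ?thesis unfolding eliminated_def .
qed

lemma no_stable_matching_if_exhausted:
  assumes "sound_deletions D" "b < n" "best_choice pref D b n = 0"
  shows "\<nexists>N. stable_matching n pref R N"
proof
  assume "\<exists>N. stable_matching n pref R N"
  then obtain N where st: "stable_matching n pref R N" by blast
  then have "\<not> D b (N ! b)" using assms(1,2) unfolding sound_deletions_def by blast
  moreover have "D b (N ! b)"
    using assms(2,3) best_choice_eq_0_iff stable_matchingD(3)[OF st] by blast
  ultimately show False by contradiction
qed

definition favourite :: "(nat \<Rightarrow> nat \<Rightarrow> bool) \<Rightarrow> nat \<Rightarrow> nat" where
  "favourite D b = best_choice pref D b n - 1"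

context
  fixes D :: "nat \<Rightarrow> nat \<Rightarrow> bool"
  assumes fixed: "elim_round n pref R D = D" and nonzero: "\<forall>b<n. best_choice pref D b n \<noteq> 0"
begin

lemma favourite_best: "b < n \<Longrightarrow> best_among pref D b n (favourite D b)"
  unfolding favourite_def by (rule best_choice_best) (use nonzero in auto)

lemma fixed_point_keeps:
  assumes "b < n" "x < n" "y < n" "x \<noteq> b" "y = favourite D b \<or> pref b y (favourite D b)" "\<not> D x y"
  shows "R y x b"
proof -
  have "eliminate n pref R D b x y = D x y" using elim_round_fixed[OF fixed \<open>b < n\<close>] by simp
  moreover have "above_best pref b (best_choice pref D b n) y"
    using assms(5) unfolding above_best_def favourite_def by blast
  ultimately show ?thesis using assms unfolding eliminate_def by auto
qed

lemma favourite_inj: "i < n \<Longrightarrow> j < n \<Longrightarrow> favourite D i = favourite D j \<Longrightarrow> i = j"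
proof (rule ccontr)
  assume ij: "i < n" "j < n" "favourite D i = favourite D j" "i \<noteq> j"
  have c: "favourite D i < n" "\<not> D i (favourite D i)" "\<not> D j (favourite D j)"
    using favourite_best[OF ij(1)] favourite_best[OF ij(2)] unfolding best_among_def by auto
  have "R (favourite D i) j i" using fixed_point_keeps[OF ij(1,2) c(1)] ij c by auto
  moreover have "R (favourite D i) i j" using fixed_point_keeps[OF ij(2,1) c(1)] ij c by auto
  ultimately show False using R_asym[OF ij(2,1) c(1)] by blast
qed

lemma favourite_matching_stable: "stable_matching n pref R (map (favourite D) [0..<n])"
proof -
  define M where "M = map (favourite D) [0..<n]"
  have M: "length M = n" "\<And>b. b < n \<Longrightarrow> M ! b = favourite D b" by (simp_all add: M_def)
  have dist: "distinct M" unfolding M_def distinct_map using favourite_inj by (auto intro: inj_onI)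
  have "set M \<subseteq> {0..<n}" using favourite_best unfolding M_def best_among_def by auto
  then have set_M: "set M = {0..<n}"
    using distinct_card[OF dist] M(1) by (intro card_subset_eq) auto
  have "\<not> blocking_pair n pref R M b c" for b c
  proof
    assume bp: "blocking_pair n pref R M b c"
    then have bc: "b < n" "c < n" "favourite D b \<noteq> c" "pref b c (favourite D b)" "\<not> R c (partner_of M c) b"
      using M unfolding blocking_pair_def by auto
    obtain x where x: "x < n" "M ! x = c" using bc(2) set_M M(1) by (metis atLeastLessThan_iff in_set_conv_nth zero_le)
    have "partner_of M c = x" using partner_of_nth[OF dist] x M(1) by auto
    moreover have "\<not> D x c" using favourite_best[OF x(1)] x M(2) unfolding best_among_def by auto
    ultimately show False using fixed_point_keeps[OF bc(1) x(1) bc(2)] bc x M(2) by auto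
  qed
  then show ?thesis unfolding stable_matching_def perfect_matching_def M_def[symmetric]
    using M(1) dist set_M by blast
qed

end

theorem choice_output_eliminated_correct: "correct_output n pref R (choice_output n pref (eliminated n pref R))"
proof (cases "\<exists>b<n. best_choice pref (eliminated n pref R) b n = 0")
  case True
  then show ?thesis using no_stable_matching_if_exhausted[OF sound_eliminated]
    unfolding correct_output_def choice_output_def by auto
next
  case False
  then have "stable_matching n pref R (map (favourite (eliminated n pref R)) [0..<n])"
    using favourite_matching_stable[OF elim_round_eliminated] by auto
  moreover have "map (favourite (eliminated n pref R)) [0..<n]
      = map (\<lambda>b. best_choice pref (eliminated n pref R) b n - 1) [0..<n]"
    by (simp add: favourite_def)
  ultimately show ?thesis using False unfolding correct_output_def choice_output_def by auto
qed

end

section \<open>Structured programs for the RAM\<close>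

definition mem_step :: "instr \<Rightarrow> (nat \<Rightarrow> nat) \<Rightarrow> nat \<Rightarrow> nat" where
  "mem_step i m = snd (exec i (0, m))"

lemma mem_step_simps [simp]:
  "mem_step (LoadC r k) m = m(r := k)"
  "mem_step (Add r a b) m = m(r := m a + m b)"
  "mem_step (Sub r a b) m = m(r := m a - m b)"
  "mem_step (LoadI r a) m = m(r := m (m a))"
  "mem_step (StoreI r a) m = m(m r := m a)"
  by (simp_all add: mem_step_def)

fun is_basic :: "instr \<Rightarrow> bool" where
  "is_basic (Jz r l) = False"
| "is_basic Halt = False"
| "is_basic _ = True"

fun exec_block :: "instr list \<Rightarrow> (nat \<Rightarrow> nat) \<Rightarrow> nat \<Rightarrow> nat" where
  "exec_block [] m = m"
| "exec_block (i # xs) m = exec_block xs (mem_step i m)"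

text \<open>IfNZ r c runs c if register r is nonzero; DoWhile c z runs c and repeats it as long as
  register z is zero afterwards.\<close>

datatype com = Blk "instr list" | Seq com com | IfNZ nat com | DoWhile com nat

fun com_len :: "com \<Rightarrow> nat" where
  "com_len (Blk xs) = length xs"
| "com_len (Seq c1 c2) = com_len c1 + com_len c2"
| "com_len (IfNZ r c) = Suc (com_len c)"
| "com_len (DoWhile c z) = Suc (com_len c)"

fun compile :: "nat \<Rightarrow> com \<Rightarrow> instr list" where
  "compile p (Blk xs) = xs"
| "compile p (Seq c1 c2) = compile p c1 @ compile (p + com_len c1) c2"
| "compile p (IfNZ r c) = Jz r (p + 1 + com_len c) # compile (Suc p) c"
| "compile p (DoWhile c z) = compile p c @ [Jz z p]"

lemma length_compile [simp]: "length (compile p c) = com_len c"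
  by (induction c arbitrary: p) auto

inductive big_step :: "com \<Rightarrow> (nat \<Rightarrow> nat) \<Rightarrow> nat \<Rightarrow> (nat \<Rightarrow> nat) \<Rightarrow> bool" where
  Blk: "list_all is_basic xs \<Longrightarrow> big_step (Blk xs) m (length xs) (exec_block xs m)"
| Seq: "big_step c1 m t1 m1 \<Longrightarrow> big_step c2 m1 t2 m2 \<Longrightarrow> big_step (Seq c1 c2) m (t1 + t2) m2"
| IfNZ_zero: "m r = 0 \<Longrightarrow> big_step (IfNZ r c) m (Suc 0) m"
| IfNZ_nonzero: "m r \<noteq> 0 \<Longrightarrow> big_step c m t m' \<Longrightarrow> big_step (IfNZ r c) m (Suc t) m'"
| DoWhile_exit: "big_step c m t m' \<Longrightarrow> m' z \<noteq> 0 \<Longrightarrow> big_step (DoWhile c z) m (Suc t) m'"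
| DoWhile_loop: "big_step c m t m' \<Longrightarrow> m' z = 0 \<Longrightarrow> big_step (DoWhile c z) m' t2 m2
    \<Longrightarrow> big_step (DoWhile c z) m (Suc t + t2) m2"

definition code_at :: "instr list \<Rightarrow> nat \<Rightarrow> instr list \<Rightarrow> bool" where
  "code_at prog p cs \<longleftrightarrow> p + length cs \<le> length prog \<and> (\<forall>i<length cs. prog ! (p + i) = cs ! i)"

lemma code_at_appendD1: "code_at prog p (xs @ ys) \<Longrightarrow> code_at prog p xs"
  by (auto simp: code_at_def nth_append)

lemma code_at_appendD2: "code_at prog p (xs @ ys) \<Longrightarrow> code_at prog (p + length xs) ys"
  unfolding code_at_def
proof safe
  assume a: "p + length (xs @ ys) \<le> length prog" "\<forall>i<length (xs @ ys). prog ! (p + i) = (xs @ ys) ! i"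
  show "p + length xs + length ys \<le> length prog" using a by simp
  fix i assume "i < length ys"
  then have "prog ! (p + (length xs + i)) = (xs @ ys) ! (length xs + i)" using a by simp
  then show "prog ! (p + length xs + i) = ys ! i" by (simp add: add.assoc)
qed

lemma code_at_ConsD: "code_at prog p (x # ys) \<Longrightarrow> prog ! p = x \<and> p < length prog"
  unfolding code_at_def
proof -
  assume a: "p + length (x # ys) \<le> length prog \<and> (\<forall>i<length (x # ys). prog ! (p + i) = (x # ys) ! i)"
  then have "prog ! (p + 0) = (x # ys) ! 0" by blast
  then show ?thesis using a by simp
qed

lemma code_at_tlD: "code_at prog p (x # ys) \<Longrightarrow> code_at prog (Suc p) ys"
  using code_at_appendD2[of prog p "[x]" ys] by simp

lemma run_0 [simp]: "run prog 0 cf = cf"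
  by (simp add: run_def)

lemma run_add: "run prog (a + b) cf = run prog b (run prog a cf)"
  unfolding run_def by (subst add.commute) (simp add: funpow_add)

lemma run_one_step:
  "code_at prog p [i] \<Longrightarrow> i \<noteq> Halt \<Longrightarrow> run prog (Suc 0) (p, m) = exec i (p, m)"
  using code_at_ConsD[of prog p i "[]"] by (simp add: run_def step_def halted_def)

lemma run_block:
  "list_all is_basic xs \<Longrightarrow> code_at prog p xs \<Longrightarrow> run prog (length xs) (p, m) = (p + length xs, exec_block xs m)"
proof (induction xs arbitrary: p m)
  case (Cons i xs)
  have "is_basic i" using Cons.prems(1) by simp
  then have "run prog (Suc 0) (p, m) = (Suc p, mem_step i m)"
    using run_one_step code_at_appendD1[of prog p "[i]" xs] Cons.prems(2)
    by (cases i) (auto simp: mem_step_def)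
  moreover have "run prog (length xs) (Suc p, mem_step i m) = (Suc p + length xs, exec_block xs (mem_step i m))"
    using Cons code_at_tlD by simp
  ultimately show ?case using run_add[of prog "Suc 0" "length xs"] by simp
qed simp

theorem big_step_run:
  "big_step c m t m' \<Longrightarrow> code_at prog p (compile p c) \<Longrightarrow> run prog t (p, m) = (p + com_len c, m')"
proof (induction arbitrary: p rule: big_step.induct)
  case (Blk xs m) then show ?case using run_block by simp
next
  case (Seq c1 m t1 m1 c2 t2 m2)
  have "code_at prog p (compile p c1)" "code_at prog (p + com_len c1) (compile (p + com_len c1) c2)"
    using Seq.prems code_at_appendD1 code_at_appendD2[of prog p "compile p c1"] by auto
  with Seq.IH show ?case by (simp add: run_add)
next
  case (IfNZ_zero m r c)
  have "code_at prog p [Jz r (p + 1 + com_len c)]"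
    using IfNZ_zero.prems code_at_appendD1[of prog p "[_]" "compile (Suc p) c"] by simp
  then show ?case using IfNZ_zero.hyps run_one_step by simp
next
  case (IfNZ_nonzero m r c t m')
  have "code_at prog p [Jz r (p + 1 + com_len c)]"
    using IfNZ_nonzero.prems code_at_appendD1[of prog p "[_]" "compile (Suc p) c"] by simp
  then have "run prog (Suc 0) (p, m) = (Suc p, m)" using IfNZ_nonzero.hyps run_one_step by simp
  moreover have "run prog t (Suc p, m) = (Suc p + com_len c, m')"
    using IfNZ_nonzero code_at_tlD by simp
  ultimately show ?case using run_add[of prog "Suc 0" t] by simp
next
  case (DoWhile_exit c m t m' z)
  have "run prog t (p, m) = (p + com_len c, m')" using DoWhile_exit code_at_appendD1 by simp
  moreover have "code_at prog (p + com_len c) [Jz z p]"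
    using DoWhile_exit.prems code_at_appendD2[of prog p "compile p c"] by simp
  then have "run prog (Suc 0) (p + com_len c, m') = (Suc (p + com_len c), m')"
    using DoWhile_exit.hyps run_one_step by simp
  ultimately show ?case using run_add[of prog t "Suc 0"] by simp
next
  case (DoWhile_loop c m t m' z t2 m2)
  have "run prog t (p, m) = (p + com_len c, m')" using DoWhile_loop code_at_appendD1 by simp
  moreover have "code_at prog (p + com_len c) [Jz z p]"
    using DoWhile_loop.prems code_at_appendD2[of prog p "compile p c"] by simp
  then have "run prog (Suc 0) (p + com_len c, m') = (p, m')"
    using DoWhile_loop.hyps run_one_step by simp
  ultimately show ?case using DoWhile_loop.IH(2)[OF DoWhile_loop.prems] run_add[of prog t "Suc 0"]
    run_add[of prog "t + Suc 0" t2] by simp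
qed

corollary big_step_compiled:
  "big_step c m t m' \<Longrightarrow> run (compile 0 c) t (0, m) = (com_len c, m') \<and> halted (compile 0 c) (com_len c, m')"
  using big_step_run[of c m t m' "compile 0 c" 0] by (simp add: code_at_def halted_def)

definition hoare :: "((nat \<Rightarrow> nat) \<Rightarrow> bool) \<Rightarrow> com \<Rightarrow> nat \<Rightarrow> ((nat \<Rightarrow> nat) \<Rightarrow> bool) \<Rightarrow> bool" where
  "hoare P c k Q \<longleftrightarrow> (\<forall>m. P m \<longrightarrow> (\<exists>t m'. big_step c m t m' \<and> t \<le> k \<and> Q m'))"

lemma hoare_Blk:
  "list_all is_basic xs \<Longrightarrow> (\<And>m. P m \<Longrightarrow> Q (exec_block xs m)) \<Longrightarrow> length xs \<le> k \<Longrightarrow> hoare P (Blk xs) k Q"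
  unfolding hoare_def using big_step.Blk by blast

lemma hoare_Seq: "hoare P c1 k1 Q \<Longrightarrow> hoare Q c2 k2 R \<Longrightarrow> hoare P (Seq c1 c2) (k1 + k2) R"
  unfolding hoare_def by (meson add_le_mono big_step.Seq)

lemma hoare_Seq_le: "hoare P c1 k1 Q \<Longrightarrow> hoare Q c2 k2 R \<Longrightarrow> k1 + k2 \<le> k \<Longrightarrow> hoare P (Seq c1 c2) k R"
  unfolding hoare_def by (metis (no_types, lifting) add_le_mono big_step.Seq order_trans)

lemma hoare_conseq:
  "hoare P c k Q \<Longrightarrow> (\<And>m. P' m \<Longrightarrow> P m) \<Longrightarrow> (\<And>m. Q m \<Longrightarrow> Q' m) \<Longrightarrow> k \<le> k' \<Longrightarrow> hoare P' c k' Q'"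
  unfolding hoare_def by (meson order_trans)

lemma hoare_pointwise:
  "(\<And>m0. P m0 \<Longrightarrow> hoare (\<lambda>m. m = m0) c k (Q' m0)) \<Longrightarrow> (\<And>m0 m. P m0 \<Longrightarrow> Q' m0 m \<Longrightarrow> Q m) \<Longrightarrow> hoare P c k Q"
  unfolding hoare_def by blast

lemma hoare_IfNZ:
  assumes "hoare (\<lambda>m. P m \<and> m r \<noteq> 0) c k Q" "\<And>m. P m \<Longrightarrow> m r = 0 \<Longrightarrow> Q m" "Suc k \<le> k'"
  shows "hoare P (IfNZ r c) k' Q"
  unfolding hoare_def
proof (intro allI impI)
  fix m assume "P m"
  show "\<exists>t m'. big_step (IfNZ r c) m t m' \<and> t \<le> k' \<and> Q m'"
  proof (cases "m r = 0")
    case True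
    then have "big_step (IfNZ r c) m (Suc 0) m" by (rule big_step.IfNZ_zero)
    then show ?thesis using assms(2,3) \<open>P m\<close> True by (intro exI[of _ "Suc 0"] exI[of _ m]) auto
  next
    case False
    then obtain t m' where "big_step c m t m'" "t \<le> k" "Q m'" using assms(1) \<open>P m\<close> unfolding hoare_def by blast
    moreover have "big_step (IfNZ r c) m (Suc t) m'" by (rule big_step.IfNZ_nonzero) fact+
    ultimately show ?thesis using assms(3) by (intro exI[of _ "Suc t"] exI[of _ m']) auto
  qed
qed

lemma hoare_DoWhile:
  assumes body: "\<And>i. i < N \<Longrightarrow> hoare (Inv i) c k (\<lambda>m. Inv (Suc i) m \<and> (m z = 0 \<longleftrightarrow> Suc i < N))"
  shows "i < N \<Longrightarrow> hoare (Inv i) (DoWhile c z) ((N - i) * Suc k) (Inv N)"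
proof (induction "N - i" arbitrary: i)
  case (Suc x)
  show ?case unfolding hoare_def
  proof (intro allI impI)
    fix m assume "Inv i m"
    with body[OF Suc.prems] obtain t m' where step: "big_step c m t m'" "t \<le> k" "Inv (Suc i) m'"
      and flag: "m' z = 0 \<longleftrightarrow> Suc i < N"
      unfolding hoare_def by auto
    show "\<exists>t m'. big_step (DoWhile c z) m t m' \<and> t \<le> (N - i) * Suc k \<and> Inv N m'"
    proof (cases "Suc i < N")
      case True
      have "hoare (Inv (Suc i)) (DoWhile c z) ((N - Suc i) * Suc k) (Inv N)"
        using Suc.hyps(1)[of "Suc i"] Suc.hyps(2) True by simp
      with step(3) obtain t2 m2 where "big_step (DoWhile c z) m' t2 m2" "t2 \<le> (N - Suc i) * Suc k" "Inv N m2"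
        unfolding hoare_def by auto
      moreover have "N - i = Suc (N - Suc i)" using True by simp
      moreover have "m' z = 0" using flag True by simp
      ultimately show ?thesis
        using big_step.DoWhile_loop[OF step(1)] step(2) by (intro exI[of _ "Suc t + t2"] exI[of _ m2]) auto
    next
      case False
      then have "N = Suc i" "m' z \<noteq> 0" using Suc.prems flag by auto
      then show ?thesis
        using big_step.DoWhile_exit[OF step(1)] step(2,3) by (intro exI[of _ "Suc t"] exI[of _ m']) auto
    qed
  qed
qed simp

fun loop_free :: "com \<Rightarrow> bool" where
  "loop_free (Blk xs) = list_all is_basic xs"
| "loop_free (Seq a b) = (loop_free a \<and> loop_free b)"
| "loop_free (IfNZ r c) = loop_free c"
| "loop_free (DoWhile c z) = False"

fun lf_sem :: "com \<Rightarrow> (nat \<Rightarrow> nat) \<Rightarrow> nat \<Rightarrow> nat" where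
  "lf_sem (Blk xs) m = exec_block xs m"
| "lf_sem (Seq a b) m = lf_sem b (lf_sem a m)"
| "lf_sem (IfNZ r c) m = (if m r = 0 then m else lf_sem c m)"
| "lf_sem (DoWhile c z) m = m"

fun lf_time :: "com \<Rightarrow> (nat \<Rightarrow> nat) \<Rightarrow> nat" where
  "lf_time (Blk xs) m = length xs"
| "lf_time (Seq a b) m = lf_time a m + lf_time b (lf_sem a m)"
| "lf_time (IfNZ r c) m = (if m r = 0 then 1 else Suc (lf_time c m))"
| "lf_time (DoWhile c z) m = 0"

lemma big_step_loop_free: "loop_free c \<Longrightarrow> big_step c m (lf_time c m) (lf_sem c m)"
  by (induction c arbitrary: m) (auto intro: big_step.intros big_step.IfNZ_zero[simplified])

lemma lf_time_le: "lf_time c m \<le> com_len c"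
  by (induction c arbitrary: m) (auto intro: add_mono)

lemma hoare_loop_free:
  "loop_free c \<Longrightarrow> (\<And>m. P m \<Longrightarrow> Q (lf_sem c m)) \<Longrightarrow> com_len c \<le> k \<Longrightarrow> hoare P c k Q"
  unfolding hoare_def using big_step_loop_free lf_time_le order_trans by blast

text \<open>Register one must hold 1; the loop runs c once for each unit initially in register ctr,
  using z for the loop test z = 1 - ctr.\<close>

definition for_loop :: "nat \<Rightarrow> nat \<Rightarrow> nat \<Rightarrow> com \<Rightarrow> com" where
  "for_loop one ctr z c = IfNZ ctr (DoWhile (Seq c (Blk [Sub ctr ctr one, Sub z one ctr])) z)"

lemma hoare_for_loop:
  assumes regs: "ctr \<noteq> one" "z \<noteq> one" "ctr \<noteq> z"
    and body: "\<And>i. i < N \<Longrightarrow> hoare (\<lambda>m. Inv i m \<and> m ctr = N - i \<and> m one = 1) c k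
      (\<lambda>m. Inv (Suc i) m \<and> m ctr = N - i \<and> m one = 1)"
    and frame: "\<And>i m v w. Inv i m \<Longrightarrow> Inv i (m(ctr := v, z := w))"
    and time: "1 + N * (k + 3) \<le> K"
  shows "hoare (\<lambda>m. Inv 0 m \<and> m ctr = N \<and> m one = 1) (for_loop one ctr z c) K (\<lambda>m. Inv N m \<and> m one = 1)"
proof -
  define I where "I i m \<longleftrightarrow> Inv i m \<and> m ctr = N - i \<and> m one = 1" for i m
  have count: "hoare (\<lambda>m. Inv (Suc i) m \<and> m ctr = N - i \<and> m one = 1) (Blk [Sub ctr ctr one, Sub z one ctr]) 2
     (\<lambda>m. I (Suc i) m \<and> (m z = 0 \<longleftrightarrow> Suc i < N))" if "i < N" for i
    by (rule hoare_Blk) (use regs that frame in \<open>auto simp: I_def\<close>)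
  have iter: "hoare (I i) (Seq c (Blk [Sub ctr ctr one, Sub z one ctr])) (k + 2)
      (\<lambda>m. I (Suc i) m \<and> (m z = 0 \<longleftrightarrow> Suc i < N))" if "i < N" for i
    using hoare_Seq[OF body[OF that] count[OF that]] unfolding I_def .
  show ?thesis
  proof (cases "N = 0")
    case True
    show ?thesis unfolding for_loop_def
      by (rule hoare_IfNZ[where k=0]) (auto simp: hoare_def True intro: order_trans[OF _ time])
  next
    case False
    have "hoare (I 0) (DoWhile (Seq c (Blk [Sub ctr ctr one, Sub z one ctr])) z) ((N - 0) * Suc (k + 2)) (I N)"
      by (rule hoare_DoWhile[OF iter]) (use False in auto)
    then show ?thesis unfolding for_loop_def
      by (rule hoare_IfNZ[OF hoare_conseq]) (use False time in \<open>auto simp: I_def algebra_simps\<close>)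
  qed
qed

lemma for_loop_time_bound:
  fixes k a q j N :: nat
  assumes "k \<le> a * q ^ j" "N < q"
  shows "1 + N * (k + 3) \<le> (a + 4) * q ^ Suc j"
proof -
  have "1 \<le> q ^ j" using assms(2) by simp
  have "1 + N * (k + 3) \<le> 1 + q * (a * q ^ j + 3)" using assms by (intro add_left_mono mult_mono) auto
  also have "\<dots> = a * q ^ Suc j + 3 * q + 1" by (simp add: algebra_simps)
  also have "\<dots> \<le> a * q ^ Suc j + 4 * q ^ Suc j"
  proof -
    have "q \<le> q ^ Suc j" "1 \<le> q ^ Suc j" using \<open>1 \<le> q ^ j\<close> assms(2) by simp_all
    then show ?thesis by linarith
  qed
  finally show ?thesis by (simp add: algebra_simps)
qed

definition modifies :: "nat set \<Rightarrow> (nat \<Rightarrow> nat) \<Rightarrow> (nat \<Rightarrow> nat) \<Rightarrow> bool" where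
  "modifies S m0 m \<longleftrightarrow> (\<forall>a. a \<notin> S \<longrightarrow> m a = m0 a)"

lemma modifies_refl [simp]: "modifies S m m"
  by (simp add: modifies_def)

lemma modifies_upd [simp]: "r \<in> S \<Longrightarrow> modifies S m0 (m(r := v)) = modifies S m0 m"
  by (auto simp: modifies_def)

lemma modifies_trans: "modifies S m0 m1 \<Longrightarrow> modifies S' m1 m2 \<Longrightarrow> S' \<subseteq> S \<Longrightarrow> modifies S m0 m2"
  by (auto simp: modifies_def)

lemma modifies_outside: "modifies S m0 m \<Longrightarrow> a \<notin> S \<Longrightarrow> m a = m0 a"
  by (simp add: modifies_def)

section \<open>Index arithmetic and the input encoding\<close>

lemma pair_index_less: "x < n \<Longrightarrow> y < n \<Longrightarrow> x * n + y < n * (n::nat)"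
proof -
  assume a: "x < n" "y < n"
  have "x * n + y < Suc x * n" using a by simp
  also have "\<dots> \<le> n * n" using a by (intro mult_right_mono) auto
  finally show ?thesis .
qed

lemma pair_index_eq_iff:
  "x < n \<Longrightarrow> y < n \<Longrightarrow> x' < n \<Longrightarrow> y' < n \<Longrightarrow> x * n + y = x' * n + (y'::nat) \<longleftrightarrow> x = x' \<and> y = y'"
proof
  assume a: "x < n" "y < n" "x' < n" "y' < n" and e: "x * n + y = x' * n + y'"
  have "(x * n + y) div n = x" "(x' * n + y') div n = x'" using a by auto
  moreover have "(x * n + y) mod n = y" "(x' * n + y') mod n = y'" using a by auto
  ultimately show "x = x' \<and> y = y'" using e by metis
qed auto

lemma triple_index_less: "b < n \<Longrightarrow> c < n \<Longrightarrow> d < n \<Longrightarrow> b * n * n + c * n + d < n * n * (n::nat)"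
proof -
  assume a: "b < n" "c < n" "d < n"
  have "b * n * n + c * n + d < b * n * n + n * n" using pair_index_less a by simp
  also have "\<dots> = Suc b * (n * n)" by simp
  also have "\<dots> \<le> n * (n * n)" using a by (intro mult_right_mono) auto
  finally show ?thesis by (simp add: mult.assoc)
qed

lemma nth_concat_const:
  assumes "\<forall>x\<in>set xs. length (g x) = k" "i < length xs" "j < k"
  shows "concat (map g xs) ! (i * k + j) = g (xs ! i) ! j"
  using assms
proof (induction xs arbitrary: i)
  case (Cons x xs)
  show ?case
  proof (cases i)
    case 0 then show ?thesis using Cons.prems by (simp add: nth_append)
  next
    case (Suc i')
    then have "concat (map g (x # xs)) ! (i * k + j) = concat (map g xs) ! (i' * k + j)"
      using Cons.prems by (simp add: nth_append algebra_simps)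
    then show ?thesis using Cons Suc by simp
  qed
qed simp

lemma length_concat_const: "\<forall>x\<in>set xs. length (g x) = k \<Longrightarrow> length (concat (map g xs)) = length xs * k"
  by (induction xs) auto

lemma length_cube: "length [f b c d. b \<leftarrow> [0..<n], c \<leftarrow> [0..<n], d \<leftarrow> [0..<(n::nat)]] = n * n * n"
  using length_concat_const[of "[0..<n]" "\<lambda>b. concat (map (\<lambda>c. map (f b c) [0..<n]) [0..<n])" "n * n"]
    length_concat_const[of "[0..<n]" "\<lambda>c. map (f _ c) [0..<n]" n]
  by (simp add: concat_map_singleton)

lemma nth_cube:
  assumes "b < n" "c < n" "d < n"
  shows "[f b c d. b \<leftarrow> [0..<n], c \<leftarrow> [0..<n], d \<leftarrow> [0..<n]] ! (b * n * n + c * n + d) = f b c d"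
proof -
  let ?row = "\<lambda>b. concat (map (\<lambda>c. map (f b c) [0..<n]) [0..<n])"
  have rows: "\<forall>b\<in>set [0..<n]. length (?row b) = n * n"
    using length_concat_const[of "[0..<n]" "\<lambda>c. map (f _ c) [0..<n]" n] by simp
  have "[f b c d. b \<leftarrow> [0..<n], c \<leftarrow> [0..<n], d \<leftarrow> [0..<n]] = concat (map ?row [0..<n])"
    by (simp add: concat_map_singleton)
  moreover have "concat (map ?row [0..<n]) ! (b * (n * n) + (c * n + d)) = ?row b ! (c * n + d)"
    using nth_concat_const[OF rows, of b "c * n + d"] assms pair_index_less[of c n d] by simp
  moreover have "?row b ! (c * n + d) = f b c d"
    using nth_concat_const[of "[0..<n]" "\<lambda>c. map (f b c) [0..<n]" n c d] assms by simp
  ultimately show ?thesis by (simp add: algebra_simps)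
qed

lemma length_encode_smg: "length (encode_smg n pref R) = 1 + 2 * (n * n * n)"
  unfolding encode_smg_def by (simp add: length_cube)

lemma encode_smg_nth_0: "encode_smg n pref R ! 0 = n"
  by (simp add: encode_smg_def)

lemma encode_smg_nth_pref:
  assumes "b < n" "c < n" "d < n"
  shows "encode_smg n pref R ! (1 + (b * n * n + c * n + d)) = bit (pref b c d)"
proof -
  have "b * n * n + c * n + d < length [bit (pref b c d). b \<leftarrow> [0..<n], c \<leftarrow> [0..<n], d \<leftarrow> [0..<n]]"
    using triple_index_less[OF assms] by (simp add: length_cube)
  then show ?thesis using nth_cube[OF assms, of "\<lambda>b c d. bit (pref b c d)"]
    by (simp add: encode_smg_def nth_append)
qed

lemma encode_smg_nth_R:
  assumes "c < n" "x < n" "y < n"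
  shows "encode_smg n pref R ! (1 + n * n * n + (c * n * n + x * n + y)) = bit (R c x y)"
  using nth_cube[OF assms, of "\<lambda>c b b'. bit (R c b b')"]
  by (simp add: encode_smg_def nth_append length_cube)

section \<open>Moving blocks of memory\<close>

text \<open>Registers 0, 1, 2 serve as source pointer, target pointer and loop flag, so the copy loop
  stops at index 3 and the lowest cells are handled separately.\<close>

definition copy_body :: "instr list" where
  "copy_body = [LoadI 2 0, StoreI 1 2, LoadC 2 1, Sub 0 0 2, Sub 1 1 2, LoadC 2 3, Sub 2 2 1]"

definition copy_out :: com where
  "copy_out = Seq (Blk [Add 1 4 3, Add 0 9 1, LoadC 2 2, Sub 2 1 2])
     (Seq (IfNZ 2 (DoWhile (Blk copy_body) 2)) (Blk [LoadI 2 0, Sub 0 0 1, LoadI 0 0, LoadC 1 1]))"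

definition copy_inv :: "nat \<Rightarrow> nat \<Rightarrow> (nat \<Rightarrow> nat) \<Rightarrow> nat \<Rightarrow> (nat \<Rightarrow> nat) \<Rightarrow> bool" where
  "copy_inv n ob w k m \<longleftrightarrow> m 0 = ob + (n + 1 - k) \<and> m 1 = n + 1 - k
     \<and> (\<forall>j. n + 1 - k < j \<and> j \<le> n + 1 \<longrightarrow> m j = w j) \<and> (\<forall>j\<le>n+1. m (ob + j) = w j)"

lemma copy_body_spec:
  assumes ob: "n + 3 < ob" and k: "k < n - 1"
  shows "hoare (copy_inv n ob w k) (Blk copy_body) 7
    (\<lambda>m. copy_inv n ob w (Suc k) m \<and> (m 2 = 0 \<longleftrightarrow> Suc k < n - 1))"
proof (rule hoare_Blk)
  fix m assume h: "copy_inv n ob w k m"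
  define d where "d = n + 1 - k"
  have d: "3 \<le> d" "d \<le> n + 1" "n + 1 - Suc k = d - 1" using k by (auto simp: d_def)
  have "m 0 = ob + d" "m 1 = d" using h by (auto simp: copy_inv_def d_def)
  moreover have "m (ob + d) = w d" using h d by (auto simp: copy_inv_def)
  ultimately have step: "exec_block copy_body m
      = m(2 := w d, d := w d, 2 := 1, 0 := ob + d - 1, 1 := d - 1, 2 := 3, 2 := 3 - (d - 1))"
    using d by (simp add: copy_body_def)
  have "m j = w j" if "d < j" "j \<le> n + 1" for j
    using h that unfolding copy_inv_def d_def by auto
  then have "copy_inv n ob w (Suc k) (exec_block copy_body m)"
    using h ob d unfolding step copy_inv_def d(3) by (auto simp: le_less_Suc_eq)
  moreover have "3 - (d - 1) = 0 \<longleftrightarrow> Suc k < n - 1" using k d_def by auto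
  ultimately show "copy_inv n ob w (Suc k) (exec_block copy_body m) \<and> (exec_block copy_body m 2 = 0 \<longleftrightarrow> Suc k < n - 1)"
    unfolding step by simp
qed (auto simp: copy_body_def)

lemma copy_out_spec:
  fixes n ob :: nat and w :: "nat \<Rightarrow> nat"
  assumes w0: "w 0 = n + 1" and w1: "w 1 = 1" and ob: "n + 3 < ob"
  shows "hoare (\<lambda>m. m 4 = n \<and> m 3 = 1 \<and> m 9 = ob \<and> (\<forall>j\<le>n+1. m (ob + j) = w j)) copy_out (9 + 8 * n)
     (\<lambda>m. m 0 = n + 1 \<and> (\<forall>j. 1 \<le> j \<and> j \<le> n + 1 \<longrightarrow> m j = w j))"
proof -
  define d0 where "d0 = (if n = 0 then 1 else 2::nat)"
  define Mid where "Mid m \<longleftrightarrow> m 0 = ob + d0 \<and> m 1 = d0 \<and> (\<forall>j. d0 < j \<and> j \<le> n + 1 \<longrightarrow> m j = w j)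
    \<and> (\<forall>j\<le>n+1. m (ob + j) = w j)" for m
  have init: "hoare (\<lambda>m. m 4 = n \<and> m 3 = 1 \<and> m 9 = ob \<and> (\<forall>j\<le>n+1. m (ob + j) = w j))
     (Blk [Add 1 4 3, Add 0 9 1, LoadC 2 2, Sub 2 1 2]) 4 (\<lambda>m. copy_inv n ob w 0 m \<and> m 2 = n - 1)"
    by (rule hoare_Blk) (use ob in \<open>auto simp: copy_inv_def\<close>)
  have loop: "hoare (\<lambda>m. copy_inv n ob w 0 m \<and> m 2 = n - 1) (IfNZ 2 (DoWhile (Blk copy_body) 2)) (1 + 8 * n) Mid"
  proof (rule hoare_IfNZ)
    show "hoare (\<lambda>m. (copy_inv n ob w 0 m \<and> m 2 = n - 1) \<and> m 2 \<noteq> 0) (DoWhile (Blk copy_body) 2) (8 * n) Mid"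
    proof (cases "n - 1 = 0")
      case False
      have "hoare (copy_inv n ob w 0) (DoWhile (Blk copy_body) 2) ((n - 1 - 0) * Suc 7) (copy_inv n ob w (n - 1))"
        by (rule hoare_DoWhile[OF copy_body_spec[OF ob]]) (use False in auto)
      then show ?thesis
        by (rule hoare_conseq) (use False in \<open>auto simp: copy_inv_def Mid_def d0_def\<close>)
    qed (auto simp: hoare_def)
  qed (auto simp: copy_inv_def Mid_def d0_def)
  have finish: "hoare Mid (Blk [LoadI 2 0, Sub 0 0 1, LoadI 0 0, LoadC 1 1]) 4
     (\<lambda>m. m 0 = n + 1 \<and> (\<forall>j. 1 \<le> j \<and> j \<le> n + 1 \<longrightarrow> m j = w j))"
  proof (rule hoare_Blk)
    fix m assume h: "Mid m"
    have "m 0 = ob + d0" "m 1 = d0" "m (ob + d0) = w d0" "m (ob + 0) = w 0"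
      using h by (auto simp: Mid_def d0_def)
    then have step: "exec_block [LoadI 2 0, Sub 0 0 1, LoadI 0 0, LoadC 1 1] m = m(2 := w d0, 0 := n + 1, 1 := 1)"
      using w0 ob by (simp add: d0_def)
    show "exec_block [LoadI 2 0, Sub 0 0 1, LoadI 0 0, LoadC 1 1] m 0 = n + 1
      \<and> (\<forall>j. 1 \<le> j \<and> j \<le> n + 1 \<longrightarrow> exec_block [LoadI 2 0, Sub 0 0 1, LoadI 0 0, LoadC 1 1] m j = w j)"
      unfolding step using h w1 by (auto simp: Mid_def d0_def)
  qed auto
  show ?thesis unfolding copy_out_def
    by (rule hoare_Seq_le[OF init hoare_Seq[OF loop finish]]) simp
qed

text \<open>The input lies in cells 1..L, where the registers live; it is moved up by B = L + 41.
  The copy loop skips cell 2, so the target cell B + 2 is left zero instead (the input bit there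
  is 0 by irreflexivity of preferences), and on exit registers 0 and 1 differ by exactly B,
  which is how the next phase recovers B.\<close>

definition reloc_init :: "instr list" where
  "reloc_init = [LoadC 2 42, Add 2 2 0, StoreI 2 1, LoadC 1 41, Add 1 1 0, StoreI 1 0, Add 1 1 0, LoadC 2 2, Sub 2 0 2]"

definition reloc_body :: "instr list" where
  "reloc_body = [LoadI 2 0, StoreI 1 2, LoadC 2 1, Sub 0 0 2, Sub 1 1 2, LoadC 2 3, Sub 2 2 0]"

definition relocate :: com where
  "relocate = Seq (Blk reloc_init) (IfNZ 2 (DoWhile (Blk reloc_body) 2))"

definition reloc_inv :: "nat \<Rightarrow> nat \<Rightarrow> (nat \<Rightarrow> nat) \<Rightarrow> nat \<Rightarrow> (nat \<Rightarrow> nat) \<Rightarrow> bool" where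
  "reloc_inv L B mi k m \<longleftrightarrow> m 0 = L - k \<and> m 1 = B + (L - k) \<and> (\<forall>a. 3 \<le> a \<and> a \<le> L - k \<longrightarrow> m a = mi a)
     \<and> (\<forall>a. L - k < a \<and> a \<le> L \<longrightarrow> m (B + a) = mi a) \<and> m (B + 1) = mi 1 \<and> m B = L
     \<and> (\<forall>a. B + 2 \<le> a \<and> (a \<le> B + (L - k) \<or> B + L < a) \<longrightarrow> m a = 0)"

lemma reloc_body_spec:
  assumes k: "k < L - 2" and B: "B = L + 41"
  shows "hoare (reloc_inv L B mi k) (Blk reloc_body) 7 (\<lambda>m. reloc_inv L B mi (Suc k) m \<and> (m 2 = 0 \<longleftrightarrow> Suc k < L - 2))"
proof (rule hoare_Blk)
  fix m assume h: "reloc_inv L B mi k m"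
  define s where "s = L - k"
  have s: "3 \<le> s" "s \<le> L" "L - Suc k = s - 1" using k by (auto simp: s_def)
  have regs: "m 0 = s" "m 1 = B + s" and low: "\<forall>a. 3 \<le> a \<and> a \<le> s \<longrightarrow> m a = mi a"
    and high: "\<forall>a. s < a \<and> a \<le> L \<longrightarrow> m (B + a) = mi a" and fixed: "m (B + 1) = mi 1" "m B = L"
    and zero: "\<forall>a. B + 2 \<le> a \<and> (a \<le> B + s \<or> B + L < a) \<longrightarrow> m a = 0"
    using h unfolding reloc_inv_def s_def by auto
  have step: "exec_block reloc_body m
      = m(2 := mi s, B + s := mi s, 2 := 1, 0 := s - 1, 1 := B + s - 1, 2 := 3, 2 := 3 - (s - 1))"
    using regs low s by (simp add: reloc_body_def)
  let ?m' = "m(2 := mi s, B + s := mi s, 2 := 1, 0 := s - 1, 1 := B + s - 1, 2 := 3, 2 := 3 - (s - 1))"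
  have "reloc_inv L B mi (Suc k) ?m'"
    unfolding reloc_inv_def s(3)
  proof (intro conjI allI impI)
    show "?m' 0 = s - 1" "?m' 1 = B + (s - 1)" using s by simp_all
    show "?m' (B + 1) = mi 1" "?m' B = L" using fixed s B by simp_all
  next
    fix a assume "3 \<le> a \<and> a \<le> s - 1"
    then have "a \<noteq> B + s" "a \<noteq> 0" "a \<noteq> 1" "a \<noteq> 2" using s B by auto
    moreover have "m a = mi a" using low \<open>3 \<le> a \<and> a \<le> s - 1\<close> by auto
    ultimately show "?m' a = mi a" by simp
  next
    fix a assume a: "s - 1 < a \<and> a \<le> L"
    show "?m' (B + a) = mi a"
    proof (cases "a = s")
      case False
      then have "s < a" using a s by linarith
      then show ?thesis using high a s B by simp
    qed (simp add: B)
  next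
    fix a assume "B + 2 \<le> a \<and> (a \<le> B + (s - 1) \<or> B + L < a)"
    then show "?m' a = 0" using zero s B by auto
  qed
  moreover have "3 - (s - 1) = 0 \<longleftrightarrow> Suc k < L - 2" using k s_def by auto
  ultimately show "reloc_inv L B mi (Suc k) (exec_block reloc_body m) \<and> (exec_block reloc_body m 2 = 0 \<longleftrightarrow> Suc k < L - 2)"
    unfolding step by simp
qed (auto simp: reloc_body_def)

lemma relocate_spec:
  fixes mi :: "nat \<Rightarrow> nat" and L :: nat
  assumes L1: "1 \<le> L" and mi0: "mi 0 = L" and miz: "\<And>a. L < a \<Longrightarrow> mi a = 0"
  defines "B \<equiv> L + 41"
  shows "hoare (\<lambda>m. m = mi) relocate (10 + 8 * L) (\<lambda>m. m 1 - m 0 = B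
     \<and> (\<forall>a. 3 \<le> a \<and> a \<le> L \<longrightarrow> m (B + a) = mi a) \<and> m (B + 1) = mi 1 \<and> m B = L \<and> m (B + 2) = 0
     \<and> (\<forall>a. B + L < a \<longrightarrow> m a = 0))"
proof -
  define Fin where "Fin m \<longleftrightarrow> m 1 - m 0 = B \<and> (\<forall>a. 3 \<le> a \<and> a \<le> L \<longrightarrow> m (B + a) = mi a)
     \<and> m (B + 1) = mi 1 \<and> m B = L \<and> m (B + 2) = 0 \<and> (\<forall>a. B + L < a \<longrightarrow> m a = 0)" for m
  have init: "hoare (\<lambda>m. m = mi) (Blk reloc_init) 9 (\<lambda>m. reloc_inv L B mi 0 m \<and> m 2 = L - 2)"
  proof (rule hoare_Blk)
    fix m assume "m = mi"
    then have "exec_block reloc_init m = mi(2 := L - 2, L + 42 := mi 1, 1 := B + L, L + 41 := L)"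
      using mi0 by (auto simp: reloc_init_def B_def fun_upd_def)
    then show "reloc_inv L B mi 0 (exec_block reloc_init m) \<and> exec_block reloc_init m 2 = L - 2"
      using mi0 miz L1 by (auto simp: reloc_inv_def B_def)
  qed (auto simp: reloc_init_def)
  have fin: "Fin m" if inv: "reloc_inv L B mi k m" and k: "L - k = min L 2" for k m
  proof -
    have "m (B + a) = mi a" if "3 \<le> a" "a \<le> L" for a using inv k that unfolding reloc_inv_def B_def by auto
    moreover have "m a = 0" if "B + L < a" for a using inv L1 that unfolding reloc_inv_def B_def by auto
    moreover have "m (B + 2) = 0"
    proof (cases "L - k = 2")
      case True then show ?thesis using inv unfolding reloc_inv_def B_def by auto
    next
      case False
      then have "L < 2" using k by auto
      then show ?thesis using inv unfolding reloc_inv_def B_def by auto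
    qed
    ultimately show ?thesis using inv unfolding Fin_def reloc_inv_def B_def by auto
  qed
  have loop: "hoare (\<lambda>m. reloc_inv L B mi 0 m \<and> m 2 = L - 2) (IfNZ 2 (DoWhile (Blk reloc_body) 2)) (1 + 8 * L) Fin"
  proof (rule hoare_IfNZ)
    show "hoare (\<lambda>m. (reloc_inv L B mi 0 m \<and> m 2 = L - 2) \<and> m 2 \<noteq> 0) (DoWhile (Blk reloc_body) 2) (8 * L) Fin"
    proof (cases "L - 2 = 0")
      case False
      have "hoare (reloc_inv L B mi 0) (DoWhile (Blk reloc_body) 2) ((L - 2 - 0) * Suc 7) (reloc_inv L B mi (L - 2))"
        by (rule hoare_DoWhile[OF reloc_body_spec[OF _ B_def[THEN meta_eq_to_obj_eq]]]) (use False in auto)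
      then show ?thesis by (rule hoare_conseq) (use fin in auto)
    qed (auto simp: hoare_def)
    show "Fin m" if "reloc_inv L B mi 0 m \<and> m 2 = L - 2" "m 2 = 0" for m
      using that fin[of 0 m] by (simp add: min_def)
  qed simp
  show ?thesis unfolding relocate_def
    by (rule hoare_Seq_le[OF init hoare_conseq[OF loop]]) (auto simp: Fin_def)
qed

section \<open>Memory layout\<close>

context smg_asym begin

text \<open>Registers 0 to 39: register 3 holds 1, 4 holds n, 5 holds n * n, and 6 to 9 hold the base
  addresses of the preference table, the R table, the deletion table and the output buffer;
  the others are loop counters and scratch. Input cell a is kept at base + a, where
  base = input_len + 41, so both input tables start at base + 2.\<close>

definition input_len :: nat where "input_len = 1 + 2 * (n * n * n)"
definition base :: nat where "base = input_len + 1 + 40"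
definition pref_base :: nat where "pref_base = base + 2"
definition R_base :: nat where "R_base = pref_base + n * n * n"
definition del_base :: nat where "del_base = R_base + n * n * n"
definition out_base :: nat where "out_base = del_base + n * n"

lemma layout_bounds: "44 \<le> pref_base" "pref_base \<le> R_base" "R_base \<le> del_base" "del_base \<le> out_base" "40 < del_base"
  by (auto simp: pref_base_def R_base_def del_base_def out_base_def base_def input_len_def)

definition input_loaded :: "(nat \<Rightarrow> nat) \<Rightarrow> bool" where
  "input_loaded m \<longleftrightarrow> (\<forall>b<n. \<forall>c<n. \<forall>d<n. m (pref_base + (b * n * n + c * n + d)) = bit (pref b c d)) \<and>
     (\<forall>c<n. \<forall>x<n. \<forall>y<n. m (R_base + (c * n * n + x * n + y)) = bit (R c x y))"

definition del_table :: "(nat \<Rightarrow> nat) \<Rightarrow> (nat \<Rightarrow> nat \<Rightarrow> bool) \<Rightarrow> bool" where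
  "del_table m D \<longleftrightarrow> (\<forall>x<n. \<forall>y<n. m (del_base + (x * n + y)) = bit (D x y))"

definition layout_ok :: "(nat \<Rightarrow> nat) \<Rightarrow> bool" where
  "layout_ok m \<longleftrightarrow> m 3 = 1 \<and> m 4 = n \<and> m 5 = n * n \<and> m 6 = pref_base \<and> m 7 = R_base \<and> m 8 = del_base \<and> m 9 = out_base \<and> input_loaded m"

lemma input_loaded_modifies: "input_loaded m0 \<Longrightarrow> modifies S m0 m \<Longrightarrow> S \<subseteq> {..<40} \<union> {del_base..} \<Longrightarrow> input_loaded m"
proof -
  assume a: "input_loaded m0" "modifies S m0 m" "S \<subseteq> {..<40} \<union> {del_base..}"
  have p: "m (pref_base + (b * n * n + c * n + d)) = m0 (pref_base + (b * n * n + c * n + d))" if "b < n" "c < n" "d < n" for b c d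
  proof (rule modifies_outside[OF a(2)])
    have "b * n * n + c * n + d < n * n * n" using triple_index_less that .
    then have "pref_base + (b * n * n + c * n + d) < del_base" "40 \<le> pref_base + (b * n * n + c * n + d)"
      using layout_bounds unfolding R_base_def del_base_def by auto
    then show "pref_base + (b * n * n + c * n + d) \<notin> S" using a(3) by auto
  qed
  have r: "m (R_base + (c * n * n + x * n + y)) = m0 (R_base + (c * n * n + x * n + y))" if "c < n" "x < n" "y < n" for c x y
  proof (rule modifies_outside[OF a(2)])
    have "c * n * n + x * n + y < n * n * n" using triple_index_less that .
    then have "R_base + (c * n * n + x * n + y) < del_base" "40 \<le> R_base + (c * n * n + x * n + y)"
      using layout_bounds unfolding del_base_def by auto
    then show "R_base + (c * n * n + x * n + y) \<notin> S" using a(3) by auto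
  qed
  show ?thesis using a(1) p r unfolding input_loaded_def by simp
qed

lemma del_table_modifies: "del_table m0 D \<Longrightarrow> modifies S m0 m \<Longrightarrow> S \<subseteq> {..<40} \<Longrightarrow> del_table m D"
proof -
  assume a: "del_table m0 D" "modifies S m0 m" "S \<subseteq> {..<40}"
  have "m (del_base + (x * n + y)) = m0 (del_base + (x * n + y))" for x y
    by (rule modifies_outside[OF a(2)]) (use a(3) layout_bounds in auto)
  then show ?thesis using a(1) unfolding del_table_def by simp
qed

lemma layout_ok_modifies: "layout_ok m0 \<Longrightarrow> modifies S m0 m \<Longrightarrow> S \<subseteq> {10..<40} \<union> {del_base..} \<Longrightarrow> layout_ok m"
proof -
  assume a: "layout_ok m0" "modifies S m0 m" "S \<subseteq> {10..<40} \<union> {del_base..}"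
  have s: "S \<subseteq> {..<40} \<union> {del_base..}" using a(3) by auto
  have "\<And>r. r \<in> {3,4,5,6,7,8,9} \<Longrightarrow> m r = m0 r"
    by (rule modifies_outside[OF a(2)]) (use a(3) layout_bounds in auto)
  then show ?thesis using a(1) input_loaded_modifies[OF _ a(2) s] unfolding layout_ok_def by simp
qed

lemma del_table_set: "del_table m D \<Longrightarrow> x < n \<Longrightarrow> y < n \<Longrightarrow> del_table (m(del_base + (x * n + y) := 1)) (\<lambda>a b. D a b \<or> (a = x \<and> b = y))"
  unfolding del_table_def
proof (intro allI impI)
  fix a b assume h: "\<forall>x<n. \<forall>y<n. m (del_base + (x * n + y)) = bit (D x y)" "x < n" "y < n" "a < n" "b < n"
  show "(m(del_base + (x * n + y) := 1)) (del_base + (a * n + b)) = bit (D a b \<or> a = x \<and> b = y)"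
    using h pair_index_eq_iff[of a n b x y] by (auto simp: bit_def)
qed

section \<open>Computing best choices\<close>

definition choice_body :: com where
  "choice_body = Seq (Blk [LoadI 22 21, Sub 23 3 22]) (IfNZ 23 (Seq (Blk [Sub 24 3 19])
      (Seq (IfNZ 19 (Blk [Add 25 20 19, Sub 25 25 3, LoadI 24 25])) (IfNZ 24 (Blk [Add 19 18 3])))))"

definition choice_iter :: com where
  "choice_iter = Seq choice_body (Blk [Add 18 18 3, Add 20 20 4, Add 21 21 3])"

definition choice_prog :: com where
  "choice_prog = Seq (Blk [LoadC 19 0, LoadC 17 0, Add 17 17 4, LoadC 18 0, LoadC 22 0, Add 20 15 22, Add 21 16 22])
     (for_loop 3 17 12 choice_iter)"

definition writes_choice :: "nat set" where "writes_choice = {12,17,18,19,20,21,22,23,24,25}"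

lemma choice_iter_spec:
  assumes b: "b < n" and i: "i < n" and m0: "layout_ok m0" "del_table m0 D"
  shows "hoare (\<lambda>m. (modifies writes_choice m0 m \<and> m 18 = i \<and> m 20 = pref_base + (b * n * n + i * n) \<and> m 21 = del_base + (b * n + i)
               \<and> m 19 = best_choice pref D b i) \<and> m 17 = n - i \<and> m 3 = 1)
     choice_iter 13
     (\<lambda>m. (modifies writes_choice m0 m \<and> m 18 = Suc i \<and> m 20 = pref_base + (b * n * n + Suc i * n) \<and> m 21 = del_base + (b * n + Suc i)
               \<and> m 19 = best_choice pref D b (Suc i)) \<and> m 17 = n - i \<and> m 3 = 1)"
proof (rule hoare_loop_free)
  show "loop_free choice_iter" by (simp add: choice_iter_def choice_body_def)
  show "com_len choice_iter \<le> 13" by (simp add: choice_iter_def choice_body_def)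
  fix m assume h: "(modifies writes_choice m0 m \<and> m 18 = i \<and> m 20 = pref_base + (b * n * n + i * n) \<and> m 21 = del_base + (b * n + i)
               \<and> m 19 = best_choice pref D b i) \<and> m 17 = n - i \<and> m 3 = 1"
  define s where "s = best_choice pref D b i"
  have s_le: "s \<le> i" unfolding s_def by (rule best_choice_le)
  have rd: "m (del_base + (b * n + i)) = bit (D b i)"
  proof -
    have "del_base + (b * n + i) \<notin> writes_choice" using layout_bounds by (auto simp: writes_choice_def)
    then have "m (del_base + (b * n + i)) = m0 (del_base + (b * n + i))" using h modifies_outside by blast
    then show ?thesis using m0(2) b i unfolding del_table_def by simp
  qed
  have rp: "m (pref_base + (b * n * n + i * n) + s - 1) = bit (pref b i (s - 1))" if "0 < s"
  proof -
    have e: "pref_base + (b * n * n + i * n) + s - 1 = pref_base + (b * n * n + i * n + (s - 1))" using that by simp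
    have sn: "s - 1 < n" using s_le i that by simp
    have "b * n * n + i * n + (s - 1) < n * n * n" using triple_index_less[OF b i sn] .
    then have "pref_base + (b * n * n + i * n + (s - 1)) \<notin> writes_choice" using layout_bounds by (auto simp: writes_choice_def)
    then have "m (pref_base + (b * n * n + i * n + (s - 1))) = m0 (pref_base + (b * n * n + i * n + (s - 1)))" using h modifies_outside by blast
    moreover have "input_loaded m0" using m0(1) layout_ok_def by simp
    ultimately show ?thesis using e b i sn unfolding input_loaded_def by simp
  qed
  have addr_high: "40 \<le> pref_base + (b * n * n + i * n) + s - 1" using layout_bounds by simp
  have ss: "best_choice pref D b (Suc i) = choice_step pref D b s i" unfolding s_def by (rule best_choice_Suc)
  have st: "m 19 = s" using h s_def by simp
  have m4: "m 4 = n"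
  proof -
    have "m 4 = m0 4" using h modifies_outside[of writes_choice m0 m 4] by (simp add: writes_choice_def)
    then show ?thesis using m0(1) by (simp add: layout_ok_def)
  qed
  show "(modifies writes_choice m0 (lf_sem choice_iter m) \<and> lf_sem choice_iter m 18 = Suc i \<and>
        lf_sem choice_iter m 20 = pref_base + (b * n * n + Suc i * n) \<and> lf_sem choice_iter m 21 = del_base + (b * n + Suc i)
        \<and> lf_sem choice_iter m 19 = best_choice pref D b (Suc i)) \<and> lf_sem choice_iter m 17 = n - i \<and> lf_sem choice_iter m 3 = 1"
  proof (cases "D b i")
    case True
    then show ?thesis using h rd ss st m4 by (simp add: choice_iter_def choice_body_def writes_choice_def choice_step_def bit_def algebra_simps)
  next
    case nd: False
    show ?thesis
    proof (cases "s = 0")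
      case True
      then show ?thesis using h rd ss st nd m4 by (simp add: choice_iter_def choice_body_def writes_choice_def choice_step_def bit_def algebra_simps)
    next
      case False
      then show ?thesis using h rd ss st nd rp m4 addr_high by (simp add: choice_iter_def choice_body_def writes_choice_def choice_step_def bit_def algebra_simps)
    qed
  qed
qed

lemma choice_prog_spec:
  assumes b: "b < n" and m0: "layout_ok m0" "del_table m0 D" "m0 15 = pref_base + b * n * n" "m0 16 = del_base + b * n"
  shows "hoare (\<lambda>m. m = m0) choice_prog (8 + 16 * n) (\<lambda>m. modifies writes_choice m0 m \<and> m 19 = best_choice pref D b n)"
proof -
  define Inv where "Inv i m = (modifies writes_choice m0 m \<and> m 18 = i \<and> m 20 = pref_base + (b * n * n + i * n) \<and> m 21 = del_base + (b * n + i)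
               \<and> m 19 = best_choice pref D b i)" for i m
  have m03: "m0 3 = 1" "m0 4 = n" using m0(1) by (auto simp: layout_ok_def)
  have blk: "hoare (\<lambda>m. m = m0) (Blk [LoadC 19 0, LoadC 17 0, Add 17 17 4, LoadC 18 0, LoadC 22 0, Add 20 15 22, Add 21 16 22]) 7
     (\<lambda>m. Inv 0 m \<and> m 17 = n \<and> m 3 = 1)"
    by (rule hoare_Blk) (auto simp: Inv_def writes_choice_def m0 m03)
  have fr: "hoare (\<lambda>m. Inv 0 m \<and> m 17 = n \<and> m 3 = 1) (for_loop 3 17 12 choice_iter) (1 + n * 16) (\<lambda>m. Inv n m \<and> m 3 = 1)"
  proof (rule hoare_for_loop)
    show "\<And>i. i < n \<Longrightarrow> hoare (\<lambda>m. Inv i m \<and> m 17 = n - i \<and> m 3 = 1) choice_iter 13 (\<lambda>m. Inv (Suc i) m \<and> m 17 = n - i \<and> m 3 = 1)"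
      unfolding Inv_def using choice_iter_spec[OF b _ m0(1,2)] by simp
    show "\<And>i m v w. Inv i m \<Longrightarrow> Inv i (m(17 := v, 12 := w))" by (simp add: Inv_def writes_choice_def)
  qed auto
  show ?thesis unfolding choice_prog_def
    by (rule hoare_Seq_le[OF blk hoare_conseq[OF fr]]) (auto simp: Inv_def)
qed

section \<open>Deleting pairs\<close>

lemma del_table_cong: "del_table m D \<Longrightarrow> (\<And>x y. x < n \<Longrightarrow> y < n \<Longrightarrow> D x y = D' x y) \<Longrightarrow> del_table m D'"
  unfolding del_table_def by simp

definition writes_column :: "nat set" where "writes_column = {12, 22, 23, 28, 29, 30, 31} \<union> {del_base..}"
definition writes_delete :: "nat set" where "writes_delete = {12, 17, 18, 20, 22, 23, 24, 25, 26, 27, 28, 29, 30, 31} \<union> {del_base..}"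

lemma writes_delete_subset: "writes_delete \<subseteq> {10..<40} \<union> {del_base..}" by (auto simp: writes_delete_def)
lemma writes_column_subset: "writes_column \<subseteq> {10..<40} \<union> {del_base..}" by (auto simp: writes_column_def)
lemma writes_column_delete: "writes_column \<subseteq> writes_delete" by (auto simp: writes_column_def writes_delete_def)

definition delete_entry :: com where
  "delete_entry = Seq (Blk [Sub 22 29 14, Sub 23 14 29, Add 22 22 23])
     (IfNZ 22 (Seq (Blk [LoadI 23 30, Sub 23 3 23]) (IfNZ 23 (Blk [StoreI 31 3]))))"

definition delete_entry_iter :: com where
  "delete_entry_iter = Seq delete_entry (Blk [Add 29 29 3, Add 30 30 4, Add 31 31 4])"

definition delete_column :: com where
  "delete_column = Seq (Blk [LoadC 28 0, Add 28 28 4, LoadC 29 0, LoadC 22 0, Add 30 27 22, Add 31 8 18])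
     (for_loop 3 28 12 delete_entry_iter)"

lemma delete_entry_iter_spec:
  assumes b: "b < n" and c: "c < n" and j: "j < n" and m0: "layout_ok m0"
  shows "hoare (\<lambda>m. (modifies writes_column m0 m \<and> del_table m (\<lambda>x y. Dc x y \<or> (y = c \<and> x < j \<and> x \<noteq> b \<and> \<not> R c x b)) \<and> m 29 = j
        \<and> m 30 = R_base + (c * n * n + j * n + b) \<and> m 31 = del_base + (j * n + c) \<and> m 14 = b) \<and> m 28 = n - j \<and> m 3 = 1)
     delete_entry_iter 11
     (\<lambda>m. (modifies writes_column m0 m \<and> del_table m (\<lambda>x y. Dc x y \<or> (y = c \<and> x < Suc j \<and> x \<noteq> b \<and> \<not> R c x b)) \<and> m 29 = Suc j
        \<and> m 30 = R_base + (c * n * n + Suc j * n + b) \<and> m 31 = del_base + (Suc j * n + c) \<and> m 14 = b) \<and> m 28 = n - j \<and> m 3 = 1)"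
proof (rule hoare_loop_free)
  show "loop_free delete_entry_iter" by (simp add: delete_entry_iter_def delete_entry_def)
  show "com_len delete_entry_iter \<le> 11" by (simp add: delete_entry_iter_def delete_entry_def)
  fix m assume h: "(modifies writes_column m0 m \<and> del_table m (\<lambda>x y. Dc x y \<or> (y = c \<and> x < j \<and> x \<noteq> b \<and> \<not> R c x b)) \<and> m 29 = j
        \<and> m 30 = R_base + (c * n * n + j * n + b) \<and> m 31 = del_base + (j * n + c) \<and> m 14 = b) \<and> m 28 = n - j \<and> m 3 = 1"
  have bs: "layout_ok m" using layout_ok_modifies[OF m0 _ writes_column_subset] h by blast
  then have m4: "m 4 = n" and inp: "input_loaded m" by (auto simp: layout_ok_def)
  have rr: "m (R_base + (c * n * n + j * n + b)) = bit (R c j b)" using inp c j b unfolding input_loaded_def by simp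
  have a1: "40 \<le> R_base + (c * n * n + j * n + b)" using layout_bounds by simp
  have a2: "40 \<le> del_base + (j * n + c)" using layout_bounds by simp
  have dbS: "del_base + (j * n + c) \<in> writes_column" by (simp add: writes_column_def)
  define D1 where "D1 = (\<lambda>x y. Dc x y \<or> (y = c \<and> x < j \<and> x \<noteq> b \<and> \<not> R c x b))"
  define D2 where "D2 = (\<lambda>x y. Dc x y \<or> (y = c \<and> x < Suc j \<and> x \<noteq> b \<and> \<not> R c x b))"
  have dm: "del_table m D1" using h D1_def by simp
  show "(modifies writes_column m0 (lf_sem delete_entry_iter m) \<and> del_table (lf_sem delete_entry_iter m) D2 \<and> lf_sem delete_entry_iter m 29 = Suc j
        \<and> lf_sem delete_entry_iter m 30 = R_base + (c * n * n + Suc j * n + b) \<and> lf_sem delete_entry_iter m 31 = del_base + (Suc j * n + c) \<and> lf_sem delete_entry_iter m 14 = b) \<and> lf_sem delete_entry_iter m 28 = n - j \<and> lf_sem delete_entry_iter m 3 = 1"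
  proof (cases "j \<noteq> b \<and> \<not> R c j b")
    case True
    have jb: "j - b + (b - j) \<noteq> 0" using True by auto
    have u: "modifies {22, 23, 29, 30, 31} (m(del_base + (j * n + c) := 1)) (lf_sem delete_entry_iter m)"
      unfolding modifies_def using h rr a1 a2 jb True m4 by (simp add: delete_entry_iter_def delete_entry_def bit_def)
    have dm2: "del_table (m(del_base + (j * n + c) := 1)) D2"
      by (rule del_table_cong[OF del_table_set[OF dm j c]]) (auto simp: D1_def D2_def True less_Suc_eq)
    have dm3: "del_table (lf_sem delete_entry_iter m) D2" using del_table_modifies[OF dm2 u] by simp
    have u2: "modifies writes_column m0 (lf_sem delete_entry_iter m)"
      unfolding modifies_def using h rr a1 a2 jb True m4 modifies_outside[of writes_column m0 m] by (simp add: delete_entry_iter_def delete_entry_def bit_def writes_column_def)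
    show ?thesis using h dm3 u2 rr a1 a2 jb True m4 by (simp add: delete_entry_iter_def delete_entry_def bit_def algebra_simps)
  next
    case False
    have u: "modifies {22, 23, 29, 30, 31} m (lf_sem delete_entry_iter m)"
      unfolding modifies_def using h rr a1 a2 False m4 by (auto simp: delete_entry_iter_def delete_entry_def bit_def)
    have "del_table m D2" by (rule del_table_cong[OF dm]) (use False in \<open>auto simp: D1_def D2_def less_Suc_eq\<close>)
    then have dm3: "del_table (lf_sem delete_entry_iter m) D2" using del_table_modifies[OF _ u] by simp
    have u2: "modifies writes_column m0 (lf_sem delete_entry_iter m)" using modifies_trans[OF _ u] h by (auto simp: writes_column_def)
    show ?thesis using h dm3 u2 rr a1 a2 False m4 by (auto simp: delete_entry_iter_def delete_entry_def bit_def algebra_simps)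
  qed
qed

lemma delete_column_spec:
  assumes b: "b < n" and c: "c < n" and m0: "layout_ok m0" "del_table m0 Dc" "m0 14 = b" "m0 18 = c" "m0 27 = R_base + (c * n * n + b)"
  shows "hoare (\<lambda>m. m = m0) delete_column (7 + n * 14)
     (\<lambda>m. modifies writes_column m0 m \<and> del_table m (\<lambda>x y. Dc x y \<or> (y = c \<and> x < n \<and> x \<noteq> b \<and> \<not> R c x b)))"
proof -
  define Inv where "Inv j m = (modifies writes_column m0 m \<and> del_table m (\<lambda>x y. Dc x y \<or> (y = c \<and> x < j \<and> x \<noteq> b \<and> \<not> R c x b)) \<and> m 29 = j
        \<and> m 30 = R_base + (c * n * n + j * n + b) \<and> m 31 = del_base + (j * n + c) \<and> m 14 = b)" for j m
  have m03: "m0 3 = 1" "m0 4 = n" "m0 8 = del_base" using m0(1) by (auto simp: layout_ok_def)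
  have blk: "hoare (\<lambda>m. m = m0) (Blk [LoadC 28 0, Add 28 28 4, LoadC 29 0, LoadC 22 0, Add 30 27 22, Add 31 8 18]) 6
     (\<lambda>m. Inv 0 m \<and> m 28 = n \<and> m 3 = 1)"
  proof (rule hoare_Blk)
    fix m assume "m = m0"
    have d: "del_table m0 (\<lambda>x y. Dc x y \<or> (y = c \<and> x < 0 \<and> x \<noteq> b \<and> \<not> R c x b))" using m0(2) by simp
    have "del_table (m0(28 := n, 29 := 0, 22 := 0, 30 := R_base + (c * n * n + b), 31 := del_base + c)) (\<lambda>x y. Dc x y \<or> (y = c \<and> x < 0 \<and> x \<noteq> b \<and> \<not> R c x b))"
      by (rule del_table_modifies[OF d, of "{22, 28, 29, 30, 31}"]) (auto simp: modifies_def)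
    then show "Inv 0 (exec_block [LoadC 28 0, Add 28 28 4, LoadC 29 0, LoadC 22 0, Add 30 27 22, Add 31 8 18] m) \<and>
      exec_block [LoadC 28 0, Add 28 28 4, LoadC 29 0, LoadC 22 0, Add 30 27 22, Add 31 8 18] m 28 = n \<and>
      exec_block [LoadC 28 0, Add 28 28 4, LoadC 29 0, LoadC 22 0, Add 30 27 22, Add 31 8 18] m 3 = 1"
      using \<open>m = m0\<close> m0 m03 by (simp add: Inv_def writes_column_def)
  qed auto
  have fr: "hoare (\<lambda>m. Inv 0 m \<and> m 28 = n \<and> m 3 = 1) (for_loop 3 28 12 delete_entry_iter) (1 + n * 14) (\<lambda>m. Inv n m \<and> m 3 = 1)"
  proof (rule hoare_for_loop)
    show "\<And>i. i < n \<Longrightarrow> hoare (\<lambda>m. Inv i m \<and> m 28 = n - i \<and> m 3 = 1) delete_entry_iter 11 (\<lambda>m. Inv (Suc i) m \<and> m 28 = n - i \<and> m 3 = 1)"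
      unfolding Inv_def using delete_entry_iter_spec[OF b c _ m0(1)] by simp
    show "\<And>i m v w. Inv i m \<Longrightarrow> Inv i (m(28 := v, 12 := w))"
    proof -
      fix i m v w assume "Inv i m"
      moreover have "del_table m D \<Longrightarrow> del_table (m(28 := v, 12 := w)) D" for D by (rule del_table_modifies[of m D "{12, 28}"]) (auto simp: modifies_def)
      ultimately show "Inv i (m(28 := v, 12 := w))" by (simp add: Inv_def writes_column_def)
    qed
  qed auto
  show ?thesis unfolding delete_column_def
    by (rule hoare_Seq_le[OF blk hoare_conseq[OF fr]]) (auto simp: Inv_def)
qed

definition test_above_best :: com where
  "test_above_best = Seq (Blk [Sub 24 3 19]) (IfNZ 19 (Blk [Add 25 20 19, Sub 25 25 3, LoadI 24 25, Add 26 18 3,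
      Sub 22 26 19, Sub 23 19 26, Add 22 22 23, Sub 22 3 22, Add 24 24 22]))"

definition delete_iter :: com where
  "delete_iter = Seq (Seq test_above_best (IfNZ 24 delete_column)) (Blk [Add 18 18 3, Add 20 20 4, Add 27 27 5])"

definition partial_eliminate :: "(nat \<Rightarrow> nat \<Rightarrow> bool) \<Rightarrow> nat \<Rightarrow> nat \<Rightarrow> nat \<Rightarrow> nat \<Rightarrow> nat \<Rightarrow> bool" where
  "partial_eliminate D b t i = (\<lambda>x y. D x y \<or> (x < n \<and> y < i \<and> x \<noteq> b \<and> above_best pref b t y \<and> \<not> R y x b))"

definition delete_state :: "(nat \<Rightarrow> nat \<Rightarrow> bool) \<Rightarrow> nat \<Rightarrow> nat \<Rightarrow> (nat \<Rightarrow> nat) \<Rightarrow> nat \<Rightarrow> nat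
    \<Rightarrow> (nat \<Rightarrow> nat) \<Rightarrow> bool" where
  "delete_state D b t m0 j i m \<longleftrightarrow> modifies writes_delete m0 m \<and> del_table m (partial_eliminate D b t j)
     \<and> m 18 = i \<and> m 20 = pref_base + (b * n * n + i * n) \<and> m 27 = R_base + (i * n * n + b) \<and> m 19 = t \<and> m 14 = b"

lemma test_above_best_spec:
  assumes b: "b < n" and i: "i < n" and t: "t \<le> n" and m0: "layout_ok m0"
  shows "hoare (\<lambda>m. delete_state D b t m0 i i m \<and> m 17 = n - i \<and> m 3 = 1) test_above_best 11
    (\<lambda>m. (delete_state D b t m0 i i m \<and> m 17 = n - i \<and> m 3 = 1) \<and> (m 24 \<noteq> 0 \<longleftrightarrow> above_best pref b t i))"
proof (rule hoare_loop_free)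
  show "loop_free test_above_best" "com_len test_above_best \<le> 11" by (simp_all add: test_above_best_def)
  fix m assume h: "delete_state D b t m0 i i m \<and> m 17 = n - i \<and> m 3 = 1"
  have u: "modifies {22, 23, 24, 25, 26} m (lf_sem test_above_best m)"
    unfolding modifies_def by (simp add: test_above_best_def)
  have "del_table (lf_sem test_above_best m) (partial_eliminate D b t i)"
    using h del_table_modifies[OF _ u] by (simp add: delete_state_def)
  moreover have "modifies writes_delete m0 (lf_sem test_above_best m)"
    using h modifies_trans[OF _ u] by (auto simp: delete_state_def writes_delete_def)
  moreover have "\<And>r. r \<in> {3, 14, 17, 18, 19, 20, 27} \<Longrightarrow> lf_sem test_above_best m r = m r"
    by (rule modifies_outside[OF u]) auto
  ultimately have state: "delete_state D b t m0 i i (lf_sem test_above_best m)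
      \<and> lf_sem test_above_best m 17 = n - i \<and> lf_sem test_above_best m 3 = 1"
    using h by (simp add: delete_state_def)
  have "input_loaded m"
    using layout_ok_modifies[OF m0 _ writes_delete_subset] h by (simp add: delete_state_def layout_ok_def)
  have "lf_sem test_above_best m 24 \<noteq> 0 \<longleftrightarrow> above_best pref b t i"
  proof (cases "t = 0")
    case True then show ?thesis using h by (simp add: test_above_best_def delete_state_def above_best_def)
  next
    case False
    then have "t - 1 < n" "pref_base + (b * n * n + i * n) + t - 1 = pref_base + (b * n * n + i * n + (t - 1))"
      using t by simp_all
    then have "m (pref_base + (b * n * n + i * n) + t - 1) = bit (pref b i (t - 1))"
      using \<open>input_loaded m\<close> b i unfolding input_loaded_def by simp
    moreover have "40 \<le> pref_base + (b * n * n + i * n) + t - 1" using layout_bounds by simp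
    ultimately show ?thesis using h False by (auto simp: test_above_best_def delete_state_def above_best_def bit_def)
  qed
  with state show "(delete_state D b t m0 i i (lf_sem test_above_best m)
      \<and> lf_sem test_above_best m 17 = n - i \<and> lf_sem test_above_best m 3 = 1)
    \<and> (lf_sem test_above_best m 24 \<noteq> 0 \<longleftrightarrow> above_best pref b t i)" by simp
qed

lemma delete_iter_spec:
  assumes b: "b < n" and i: "i < n" and t: "t \<le> n" and m0: "layout_ok m0"
  shows "hoare (\<lambda>m. delete_state D b t m0 i i m \<and> m 17 = n - i \<and> m 3 = 1) delete_iter (22 + n * 14)
    (\<lambda>m. delete_state D b t m0 (Suc i) (Suc i) m \<and> m 17 = n - i \<and> m 3 = 1)"
proof -
  have column: "hoare (\<lambda>m. (delete_state D b t m0 i i m \<and> m 17 = n - i \<and> m 3 = 1) \<and> (m 24 \<noteq> 0 \<longleftrightarrow> above_best pref b t i))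
      (IfNZ 24 delete_column) (8 + n * 14) (\<lambda>m. delete_state D b t m0 (Suc i) i m \<and> m 17 = n - i \<and> m 3 = 1)"
  proof (rule hoare_IfNZ)
    show "hoare (\<lambda>m. ((delete_state D b t m0 i i m \<and> m 17 = n - i \<and> m 3 = 1) \<and> (m 24 \<noteq> 0 \<longleftrightarrow> above_best pref b t i)) \<and> m 24 \<noteq> 0)
        delete_column (7 + n * 14) (\<lambda>m. delete_state D b t m0 (Suc i) i m \<and> m 17 = n - i \<and> m 3 = 1)"
    proof (rule hoare_pointwise)
      fix m1 assume h: "((delete_state D b t m0 i i m1 \<and> m1 17 = n - i \<and> m1 3 = 1) \<and> (m1 24 \<noteq> 0 \<longleftrightarrow> above_best pref b t i)) \<and> m1 24 \<noteq> 0"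
      have "layout_ok m1" using layout_ok_modifies[OF m0 _ writes_delete_subset] h by (simp add: delete_state_def)
      then show "hoare (\<lambda>m. m = m1) delete_column (7 + n * 14) (\<lambda>m. modifies writes_column m1 m
          \<and> del_table m (\<lambda>x y. partial_eliminate D b t i x y \<or> (y = i \<and> x < n \<and> x \<noteq> b \<and> \<not> R i x b)))"
        by (rule delete_column_spec[OF b i]) (use h in \<open>auto simp: delete_state_def\<close>)
    next
      fix m1 m assume h: "((delete_state D b t m0 i i m1 \<and> m1 17 = n - i \<and> m1 3 = 1) \<and> (m1 24 \<noteq> 0 \<longleftrightarrow> above_best pref b t i)) \<and> m1 24 \<noteq> 0"
        and h2: "modifies writes_column m1 m
          \<and> del_table m (\<lambda>x y. partial_eliminate D b t i x y \<or> (y = i \<and> x < n \<and> x \<noteq> b \<and> \<not> R i x b))"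
      have "del_table m (partial_eliminate D b t (Suc i))"
        by (rule del_table_cong[OF conjunct2[OF h2]]) (use h in \<open>auto simp: partial_eliminate_def less_Suc_eq\<close>)
      moreover have "\<And>r. r \<in> {3, 14, 17, 18, 19, 20, 27} \<Longrightarrow> m r = m1 r"
        by (rule modifies_outside[OF conjunct1[OF h2]]) (use layout_bounds in \<open>auto simp: writes_column_def\<close>)
      moreover have "modifies writes_delete m0 m"
        using h h2 modifies_trans[OF _ _ writes_column_delete] by (auto simp: delete_state_def)
      ultimately show "delete_state D b t m0 (Suc i) i m \<and> m 17 = n - i \<and> m 3 = 1" using h by (simp add: delete_state_def)
    qed
    show "delete_state D b t m0 (Suc i) i m \<and> m 17 = n - i \<and> m 3 = 1"
      if "(delete_state D b t m0 i i m \<and> m 17 = n - i \<and> m 3 = 1) \<and> (m 24 \<noteq> 0 \<longleftrightarrow> above_best pref b t i)" "m 24 = 0" for m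
    proof -
      have "del_table m (partial_eliminate D b t (Suc i))"
        by (rule del_table_cong[of m "partial_eliminate D b t i"])
          (use that in \<open>auto simp: delete_state_def partial_eliminate_def less_Suc_eq\<close>)
      then show ?thesis using that by (simp add: delete_state_def)
    qed
  qed simp
  have advance: "hoare (\<lambda>m. delete_state D b t m0 (Suc i) i m \<and> m 17 = n - i \<and> m 3 = 1)
     (Blk [Add 18 18 3, Add 20 20 4, Add 27 27 5]) 3
     (\<lambda>m. delete_state D b t m0 (Suc i) (Suc i) m \<and> m 17 = n - i \<and> m 3 = 1)"
  proof (rule hoare_Blk)
    fix m assume h: "delete_state D b t m0 (Suc i) i m \<and> m 17 = n - i \<and> m 3 = 1"
    have "layout_ok m" using layout_ok_modifies[OF m0 _ writes_delete_subset] h by (simp add: delete_state_def)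
    then have "m 4 = n" "m 5 = n * n" by (auto simp: layout_ok_def)
    moreover have "del_table (exec_block [Add 18 18 3, Add 20 20 4, Add 27 27 5] m) (partial_eliminate D b t (Suc i))"
      using h del_table_modifies[of m _ "{18, 20, 27}"] by (simp add: delete_state_def modifies_def)
    ultimately show "delete_state D b t m0 (Suc i) (Suc i) (exec_block [Add 18 18 3, Add 20 20 4, Add 27 27 5] m)
        \<and> exec_block [Add 18 18 3, Add 20 20 4, Add 27 27 5] m 17 = n - i
        \<and> exec_block [Add 18 18 3, Add 20 20 4, Add 27 27 5] m 3 = 1"
      using h by (simp add: delete_state_def writes_delete_def algebra_simps)
  qed auto
  show ?thesis unfolding delete_iter_def
    by (rule hoare_Seq_le[OF hoare_Seq[OF test_above_best_spec[OF b i t m0] column] advance]) simp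
qed

definition delete_prog :: com where
  "delete_prog = Seq (Blk [LoadC 17 0, Add 17 17 4, LoadC 18 0, Add 27 7 14, LoadC 22 0, Add 20 15 22]) (for_loop 3 17 12 delete_iter)"

lemma delete_prog_spec:
  assumes b: "b < n" and t: "t \<le> n"
    and m0: "layout_ok m0" "del_table m0 D" "m0 14 = b" "m0 15 = pref_base + b * n * n" "m0 19 = t"
  shows "hoare (\<lambda>m. m = m0) delete_prog (7 + n * (25 + n * 14))
    (\<lambda>m. modifies writes_delete m0 m \<and> del_table m (partial_eliminate D b t n))"
proof -
  have m03: "m0 3 = 1" "m0 4 = n" "m0 7 = R_base" using m0(1) by (auto simp: layout_ok_def)
  have init: "hoare (\<lambda>m. m = m0) (Blk [LoadC 17 0, Add 17 17 4, LoadC 18 0, Add 27 7 14, LoadC 22 0, Add 20 15 22]) 6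
     (\<lambda>m. delete_state D b t m0 0 0 m \<and> m 17 = n \<and> m 3 = 1)"
  proof (rule hoare_Blk)
    fix m assume "m = m0"
    have d: "del_table m0 (partial_eliminate D b t 0)"
      by (rule del_table_cong[OF m0(2)]) (simp add: partial_eliminate_def)
    have "del_table (m0(17 := n, 18 := 0, 27 := R_base + b, 22 := 0, 20 := pref_base + b * n * n)) (partial_eliminate D b t 0)"
      by (rule del_table_modifies[OF d, of "{17, 18, 20, 22, 27}"]) (auto simp: modifies_def)
    then show "delete_state D b t m0 0 0 (exec_block [LoadC 17 0, Add 17 17 4, LoadC 18 0, Add 27 7 14, LoadC 22 0, Add 20 15 22] m)
      \<and> exec_block [LoadC 17 0, Add 17 17 4, LoadC 18 0, Add 27 7 14, LoadC 22 0, Add 20 15 22] m 17 = n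
      \<and> exec_block [LoadC 17 0, Add 17 17 4, LoadC 18 0, Add 27 7 14, LoadC 22 0, Add 20 15 22] m 3 = 1"
      using \<open>m = m0\<close> m0 m03 by (simp add: delete_state_def writes_delete_def)
  qed auto
  have loop: "hoare (\<lambda>m. delete_state D b t m0 0 0 m \<and> m 17 = n \<and> m 3 = 1) (for_loop 3 17 12 delete_iter)
      (1 + n * (25 + n * 14)) (\<lambda>m. delete_state D b t m0 n n m \<and> m 3 = 1)"
  proof (rule hoare_for_loop)
    show "hoare (\<lambda>m. delete_state D b t m0 i i m \<and> m 17 = n - i \<and> m 3 = 1) delete_iter (22 + n * 14)
        (\<lambda>m. delete_state D b t m0 (Suc i) (Suc i) m \<and> m 17 = n - i \<and> m 3 = 1)" if "i < n" for i
      using delete_iter_spec[OF b that t m0(1)] .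
    show "delete_state D b t m0 i i (m(17 := v, 12 := w))" if "delete_state D b t m0 i i m" for i m v w
    proof -
      have "del_table m D' \<Longrightarrow> del_table (m(17 := v, 12 := w)) D'" for D'
        by (rule del_table_modifies[of m D' "{12, 17}"]) (auto simp: modifies_def)
      then show ?thesis using that by (simp add: delete_state_def writes_delete_def)
    qed
  qed (auto simp: algebra_simps)
  show ?thesis unfolding delete_prog_def
    by (rule hoare_Seq_le[OF init hoare_conseq[OF loop]]) (auto simp: delete_state_def)
qed

section \<open>Elimination rounds\<close>

definition eliminate_prog :: com where "eliminate_prog = Seq choice_prog delete_prog"

definition writes_eliminate :: "nat set" where "writes_eliminate = {12} \<union> {17..<32} \<union> {del_base..}"

lemma eliminate_prog_spec_exact:
  assumes b: "b < n" and m0: "layout_ok m0" "del_table m0 D" "m0 14 = b" "m0 15 = pref_base + b * n * n" "m0 16 = del_base + b * n"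
  shows "hoare (\<lambda>m. m = m0) eliminate_prog (15 + 16 * n + n * (25 + n * 14)) (\<lambda>m. modifies writes_eliminate m0 m \<and> del_table m (eliminate n pref R D b))"
proof (unfold eliminate_prog_def, rule hoare_Seq_le[OF choice_prog_spec[OF b m0(1,2,4,5)]])
  show "hoare (\<lambda>m. modifies writes_choice m0 m \<and> m 19 = best_choice pref D b n) delete_prog (7 + n * (25 + n * 14)) (\<lambda>m. modifies writes_eliminate m0 m \<and> del_table m (eliminate n pref R D b))"
  proof (rule hoare_pointwise)
    fix m1 assume h: "modifies writes_choice m0 m1 \<and> m1 19 = best_choice pref D b n"
    have ss: "writes_choice \<subseteq> {10..<40} \<union> {del_base..}" "writes_choice \<subseteq> {..<40}" by (auto simp: writes_choice_def)
    have bs: "layout_ok m1" using layout_ok_modifies[OF m0(1) _ ss(1)] h by blast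
    have dm: "del_table m1 D" using del_table_modifies[OF m0(2) _ ss(2)] h by blast
    have r: "\<And>r. r \<in> {14, 15} \<Longrightarrow> m1 r = m0 r" by (rule modifies_outside[of writes_choice m0]) (use h in \<open>auto simp: writes_choice_def\<close>)
    show "hoare (\<lambda>m. m = m1) delete_prog (7 + n * (25 + n * 14)) (\<lambda>m. modifies writes_delete m1 m \<and> del_table m (partial_eliminate D b (best_choice pref D b n) n))"
      by (rule delete_prog_spec[OF b best_choice_le bs dm]) (use r m0 h in auto)
  next
    fix m1 m assume h: "modifies writes_choice m0 m1 \<and> m1 19 = best_choice pref D b n" and h2: "modifies writes_delete m1 m \<and> del_table m (partial_eliminate D b (best_choice pref D b n) n)"
    have "modifies writes_eliminate m0 m" using modifies_trans[of writes_eliminate m0 m1 writes_delete m] modifies_trans[of writes_eliminate m0 m0 writes_choice m1] h h2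
      by (auto simp: writes_eliminate_def writes_choice_def writes_delete_def)
    moreover have "del_table m (eliminate n pref R D b)" by (rule del_table_cong[OF conjunct2[OF h2]]) (simp add: partial_eliminate_def eliminate_def)
    ultimately show "modifies writes_eliminate m0 m \<and> del_table m (eliminate n pref R D b)" by simp
  qed
qed simp

lemma eliminate_prog_spec:
  assumes b: "b < n" and m0: "layout_ok m0" "del_table m0 D" "m0 14 = b" "m0 15 = pref_base + b * n * n" "m0 16 = del_base + b * n"
  shows "hoare (\<lambda>m. m = m0) eliminate_prog (70 * Suc n ^ 2) (\<lambda>m. modifies writes_eliminate m0 m \<and> del_table m (eliminate n pref R D b))"
  by (rule hoare_conseq[OF eliminate_prog_spec_exact[OF assms]]) (auto simp: power2_eq_square algebra_simps)

definition round_prog :: com where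
  "round_prog = Seq (Blk [LoadC 13 0, Add 13 13 4, LoadC 14 0, LoadC 22 0, Add 15 6 22, Add 16 8 22])
     (for_loop 3 13 12 (Seq eliminate_prog (Blk [Add 14 14 3, Add 15 15 5, Add 16 16 4])))"

definition writes_round :: "nat set" where "writes_round = {12..<32} \<union> {del_base..}"

lemma round_prog_spec:
  assumes m0: "layout_ok m0" "del_table m0 D"
  shows "hoare (\<lambda>m. m = m0) round_prog (83 * Suc n ^ 3) (\<lambda>m. modifies writes_round m0 m \<and> del_table m (elim_round n pref R D))"
proof -
  define Inv where "Inv i m = (modifies writes_round m0 m \<and> del_table m (foldl (eliminate n pref R) D [0..<i]) \<and> m 14 = i \<and> m 15 = pref_base + i * n * n \<and> m 16 = del_base + i * n)" for i m
  have m03: "m0 3 = 1" "m0 4 = n" "m0 6 = pref_base" "m0 8 = del_base" using m0(1) by (auto simp: layout_ok_def)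
  have blk: "hoare (\<lambda>m. m = m0) (Blk [LoadC 13 0, Add 13 13 4, LoadC 14 0, LoadC 22 0, Add 15 6 22, Add 16 8 22]) 6
     (\<lambda>m. Inv 0 m \<and> m 13 = n \<and> m 3 = 1)"
  proof (rule hoare_Blk)
    fix m assume "m = m0"
    have "del_table (m0(13 := n, 14 := 0, 22 := 0, 15 := pref_base, 16 := del_base)) D"
      by (rule del_table_modifies[OF m0(2), of "{13, 14, 15, 16, 22}"]) (auto simp: modifies_def)
    then show "Inv 0 (exec_block [LoadC 13 0, Add 13 13 4, LoadC 14 0, LoadC 22 0, Add 15 6 22, Add 16 8 22] m) \<and>
      exec_block [LoadC 13 0, Add 13 13 4, LoadC 14 0, LoadC 22 0, Add 15 6 22, Add 16 8 22] m 13 = n \<and>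
      exec_block [LoadC 13 0, Add 13 13 4, LoadC 14 0, LoadC 22 0, Add 15 6 22, Add 16 8 22] m 3 = 1"
      using \<open>m = m0\<close> m03 by (simp add: Inv_def writes_round_def)
  qed auto
  have body: "hoare (\<lambda>m. Inv i m \<and> m 13 = n - i \<and> m 3 = 1) (Seq eliminate_prog (Blk [Add 14 14 3, Add 15 15 5, Add 16 16 4]))
      (70 * Suc n ^ 2 + 3) (\<lambda>m. Inv (Suc i) m \<and> m 13 = n - i \<and> m 3 = 1)" if i: "i < n" for i
  proof (rule hoare_pointwise)
    fix m1 assume h: "Inv i m1 \<and> m1 13 = n - i \<and> m1 3 = 1"
    have bs: "layout_ok m1" by (rule layout_ok_modifies[OF m0(1), of writes_round]) (use h in \<open>auto simp: Inv_def writes_round_def\<close>)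
    show "hoare (\<lambda>m. m = m1) (Seq eliminate_prog (Blk [Add 14 14 3, Add 15 15 5, Add 16 16 4])) (70 * Suc n ^ 2 + 3)
       (\<lambda>m. Inv (Suc i) m \<and> m 13 = n - i \<and> m 3 = 1)"
    proof (rule hoare_Seq[OF eliminate_prog_spec[OF i bs]])
      show "del_table m1 (foldl (eliminate n pref R) D [0..<i])" "m1 14 = i" "m1 15 = pref_base + i * n * n" "m1 16 = del_base + i * n"
        using h by (auto simp: Inv_def)
      show "hoare (\<lambda>m. modifies writes_eliminate m1 m \<and> del_table m (eliminate n pref R (foldl (eliminate n pref R) D [0..<i]) i))
          (Blk [Add 14 14 3, Add 15 15 5, Add 16 16 4]) 3 (\<lambda>m. Inv (Suc i) m \<and> m 13 = n - i \<and> m 3 = 1)"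
      proof (rule hoare_Blk)
        fix m assume h2: "modifies writes_eliminate m1 m \<and> del_table m (eliminate n pref R (foldl (eliminate n pref R) D [0..<i]) i)"
        have r: "\<And>r. r \<in> {3, 4, 5, 13, 14, 15, 16} \<Longrightarrow> m r = m1 r"
          by (rule modifies_outside[of writes_eliminate m1]) (use h2 layout_bounds in \<open>auto simp: writes_eliminate_def\<close>)
        have u: "modifies writes_round m0 m"
          by (rule modifies_trans[of writes_round m0 m1 writes_eliminate m]) (use h h2 in \<open>auto simp: writes_eliminate_def writes_round_def Inv_def\<close>)
        have "del_table (exec_block [Add 14 14 3, Add 15 15 5, Add 16 16 4] m) (foldl (eliminate n pref R) D [0..<Suc i])"
          using h2 del_table_modifies[of m _ "{14, 15, 16}"] by (simp add: modifies_def)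
        then show "Inv (Suc i) (exec_block [Add 14 14 3, Add 15 15 5, Add 16 16 4] m) \<and>
           exec_block [Add 14 14 3, Add 15 15 5, Add 16 16 4] m 13 = n - i \<and> exec_block [Add 14 14 3, Add 15 15 5, Add 16 16 4] m 3 = 1"
          using u r h bs by (simp add: Inv_def writes_round_def layout_ok_def algebra_simps)
      qed auto
    qed
  qed simp
  have fr: "hoare (\<lambda>m. Inv 0 m \<and> m 13 = n \<and> m 3 = 1) (for_loop 3 13 12 (Seq eliminate_prog (Blk [Add 14 14 3, Add 15 15 5, Add 16 16 4])))
      (77 * Suc n ^ 3) (\<lambda>m. Inv n m \<and> m 3 = 1)"
  proof (rule hoare_for_loop[OF _ _ _ body])
    show "\<And>i m v w. Inv i m \<Longrightarrow> Inv i (m(13 := v, 12 := w))"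
    proof -
      fix i m v w assume "Inv i m"
      moreover have "del_table m D' \<Longrightarrow> del_table (m(13 := v, 12 := w)) D'" for D' by (rule del_table_modifies[of m D' "{12, 13}"]) (auto simp: modifies_def)
      ultimately show "Inv i (m(13 := v, 12 := w))" by (simp add: Inv_def writes_round_def)
    qed
    show "1 + n * (70 * Suc n ^ 2 + 3 + 3) \<le> 77 * Suc n ^ 3"
      using for_loop_time_bound[of "70 * Suc n ^ 2 + 3" 73 "Suc n" 2 n] by (simp add: power2_eq_square)
  qed auto
  show ?thesis unfolding round_prog_def
    by (rule hoare_Seq_le[OF blk hoare_conseq[OF fr]]) (auto simp: Inv_def elim_round_def)
qed

definition rounds_prog :: com where
  "rounds_prog = Seq (Blk [LoadC 11 0, Add 11 11 4]) (for_loop 3 11 12 round_prog)"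

definition writes_rounds :: "nat set" where "writes_rounds = {11..<32} \<union> {del_base..}"

lemma rounds_prog_spec:
  assumes m0: "layout_ok m0" "del_table m0 D"
  shows "hoare (\<lambda>m. m = m0) rounds_prog (89 * Suc n ^ 4) (\<lambda>m. modifies writes_rounds m0 m \<and> del_table m ((elim_round n pref R ^^ n) D))"
proof -
  define Inv where "Inv j m = (modifies writes_rounds m0 m \<and> del_table m ((elim_round n pref R ^^ j) D))" for j m
  have m03: "m0 3 = 1" "m0 4 = n" using m0(1) by (auto simp: layout_ok_def)
  have blk: "hoare (\<lambda>m. m = m0) (Blk [LoadC 11 0, Add 11 11 4]) 2 (\<lambda>m. Inv 0 m \<and> m 11 = n \<and> m 3 = 1)"
  proof (rule hoare_Blk)
    fix m assume "m = m0"
    have "del_table (m0(11 := n)) D" by (rule del_table_modifies[OF m0(2), of "{11}"]) (auto simp: modifies_def)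
    then show "Inv 0 (exec_block [LoadC 11 0, Add 11 11 4] m) \<and> exec_block [LoadC 11 0, Add 11 11 4] m 11 = n \<and> exec_block [LoadC 11 0, Add 11 11 4] m 3 = 1"
      using \<open>m = m0\<close> m03 by (simp add: Inv_def writes_rounds_def)
  qed auto
  have body: "hoare (\<lambda>m. Inv i m \<and> m 11 = n - i \<and> m 3 = 1) round_prog (83 * Suc n ^ 3) (\<lambda>m. Inv (Suc i) m \<and> m 11 = n - i \<and> m 3 = 1)"
    if i: "i < n" for i
  proof (rule hoare_pointwise)
    fix m1 assume h: "Inv i m1 \<and> m1 11 = n - i \<and> m1 3 = 1"
    have bs: "layout_ok m1" by (rule layout_ok_modifies[OF m0(1), of writes_rounds]) (use h in \<open>auto simp: Inv_def writes_rounds_def\<close>)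
    show "hoare (\<lambda>m. m = m1) round_prog (83 * Suc n ^ 3) (\<lambda>m. modifies writes_round m1 m \<and> del_table m (elim_round n pref R ((elim_round n pref R ^^ i) D)))"
      by (rule round_prog_spec[OF bs]) (use h in \<open>simp add: Inv_def\<close>)
  next
    fix m1 m assume h: "Inv i m1 \<and> m1 11 = n - i \<and> m1 3 = 1" and h2: "modifies writes_round m1 m \<and> del_table m (elim_round n pref R ((elim_round n pref R ^^ i) D))"
    have r: "\<And>r. r \<in> {3, 11} \<Longrightarrow> m r = m1 r"
      by (rule modifies_outside[of writes_round m1]) (use h2 layout_bounds in \<open>auto simp: writes_round_def\<close>)
    have u: "modifies writes_rounds m0 m"
      by (rule modifies_trans[of writes_rounds m0 m1 writes_round m]) (use h h2 in \<open>auto simp: writes_round_def writes_rounds_def Inv_def\<close>)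
    show "Inv (Suc i) m \<and> m 11 = n - i \<and> m 3 = 1" using u r h h2 by (simp add: Inv_def)
  qed
  have fr: "hoare (\<lambda>m. Inv 0 m \<and> m 11 = n \<and> m 3 = 1) (for_loop 3 11 12 round_prog) (87 * Suc n ^ 4) (\<lambda>m. Inv n m \<and> m 3 = 1)"
  proof (rule hoare_for_loop[OF _ _ _ body])
    show "\<And>i m v w. Inv i m \<Longrightarrow> Inv i (m(11 := v, 12 := w))"
    proof -
      fix i m v w assume "Inv i m"
      moreover have "del_table m D' \<Longrightarrow> del_table (m(11 := v, 12 := w)) D'" for D' by (rule del_table_modifies[of m D' "{11, 12}"]) (auto simp: modifies_def)
      ultimately show "Inv i (m(11 := v, 12 := w))" by (simp add: Inv_def writes_rounds_def)
    qed
    show "1 + n * (83 * Suc n ^ 3 + 3) \<le> 87 * Suc n ^ 4"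
      using for_loop_time_bound[of "83 * Suc n ^ 3" 83 "Suc n" 3 n] by simp
  qed auto
  show ?thesis unfolding rounds_prog_def
    by (rule hoare_Seq_le[OF blk hoare_conseq[OF fr]]) (auto simp: Inv_def)
qed

definition elimination_prog :: com where
  "elimination_prog = Seq (Blk [LoadC 10 0, Add 10 10 4]) (for_loop 3 10 12 rounds_prog)"

definition writes_elimination :: "nat set" where "writes_elimination = {10..<32} \<union> {del_base..}"

lemma elimination_prog_spec:
  assumes m0: "layout_ok m0" "del_table m0 (\<lambda>_ _. False)"
  shows "hoare (\<lambda>m. m = m0) elimination_prog (95 * Suc n ^ 5) (\<lambda>m. modifies writes_elimination m0 m \<and> del_table m (eliminated n pref R))"
proof -
  define Inv where "Inv i m = (modifies writes_elimination m0 m \<and> del_table m ((elim_round n pref R ^^ (i * n)) (\<lambda>_ _. False)))" for i m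
  have m03: "m0 3 = 1" "m0 4 = n" using m0(1) by (auto simp: layout_ok_def)
  have blk: "hoare (\<lambda>m. m = m0) (Blk [LoadC 10 0, Add 10 10 4]) 2 (\<lambda>m. Inv 0 m \<and> m 10 = n \<and> m 3 = 1)"
  proof (rule hoare_Blk)
    fix m assume "m = m0"
    have "del_table (m0(10 := n)) (\<lambda>_ _. False)" by (rule del_table_modifies[OF m0(2), of "{10}"]) (auto simp: modifies_def)
    then show "Inv 0 (exec_block [LoadC 10 0, Add 10 10 4] m) \<and> exec_block [LoadC 10 0, Add 10 10 4] m 10 = n \<and> exec_block [LoadC 10 0, Add 10 10 4] m 3 = 1"
      using \<open>m = m0\<close> m03 by (simp add: Inv_def writes_elimination_def)
  qed auto
  have body: "hoare (\<lambda>m. Inv i m \<and> m 10 = n - i \<and> m 3 = 1) rounds_prog (89 * Suc n ^ 4) (\<lambda>m. Inv (Suc i) m \<and> m 10 = n - i \<and> m 3 = 1)"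
    if i: "i < n" for i
  proof (rule hoare_pointwise)
    fix m1 assume h: "Inv i m1 \<and> m1 10 = n - i \<and> m1 3 = 1"
    have bs: "layout_ok m1" by (rule layout_ok_modifies[OF m0(1), of writes_elimination]) (use h in \<open>auto simp: Inv_def writes_elimination_def\<close>)
    show "hoare (\<lambda>m. m = m1) rounds_prog (89 * Suc n ^ 4) (\<lambda>m. modifies writes_rounds m1 m \<and> del_table m ((elim_round n pref R ^^ n) ((elim_round n pref R ^^ (i * n)) (\<lambda>_ _. False))))"
      by (rule rounds_prog_spec[OF bs]) (use h in \<open>simp add: Inv_def\<close>)
  next
    fix m1 m assume h: "Inv i m1 \<and> m1 10 = n - i \<and> m1 3 = 1"
      and h2: "modifies writes_rounds m1 m \<and> del_table m ((elim_round n pref R ^^ n) ((elim_round n pref R ^^ (i * n)) (\<lambda>_ _. False)))"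
    have r: "\<And>r. r \<in> {3, 10} \<Longrightarrow> m r = m1 r"
      by (rule modifies_outside[of writes_rounds m1]) (use h2 layout_bounds in \<open>auto simp: writes_rounds_def\<close>)
    have u: "modifies writes_elimination m0 m"
      by (rule modifies_trans[of writes_elimination m0 m1 writes_rounds m]) (use h h2 in \<open>auto simp: writes_elimination_def writes_rounds_def Inv_def\<close>)
    have "(elim_round n pref R ^^ n) ((elim_round n pref R ^^ (i * n)) (\<lambda>_ _. False)) = (elim_round n pref R ^^ (Suc i * n)) (\<lambda>_ _. False)"
      by (simp add: funpow_add)
    then show "Inv (Suc i) m \<and> m 10 = n - i \<and> m 3 = 1" using u r h h2 by (simp add: Inv_def)
  qed
  have fr: "hoare (\<lambda>m. Inv 0 m \<and> m 10 = n \<and> m 3 = 1) (for_loop 3 10 12 rounds_prog) (93 * Suc n ^ 5) (\<lambda>m. Inv n m \<and> m 3 = 1)"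
  proof (rule hoare_for_loop[OF _ _ _ body])
    show "\<And>i m v w. Inv i m \<Longrightarrow> Inv i (m(10 := v, 12 := w))"
    proof -
      fix i m v w assume "Inv i m"
      moreover have "del_table m D' \<Longrightarrow> del_table (m(10 := v, 12 := w)) D'" for D' by (rule del_table_modifies[of m D' "{10, 12}"]) (auto simp: modifies_def)
      ultimately show "Inv i (m(10 := v, 12 := w))" by (simp add: Inv_def writes_elimination_def)
    qed
    show "1 + n * (89 * Suc n ^ 4 + 3) \<le> 93 * Suc n ^ 5"
      using for_loop_time_bound[of "89 * Suc n ^ 4" 89 "Suc n" 4 n] by simp
  qed auto
  show ?thesis unfolding elimination_prog_def
    by (rule hoare_Seq_le[OF blk hoare_conseq[OF fr]]) (auto simp: Inv_def eliminated_def)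
qed

section \<open>Writing the output\<close>

text \<open>The answer is assembled in a buffer at out_base: n + 1, then 1, then the best choice of each
  man; register 32 becomes nonzero if some man has no choice left, in which case [0] is output
  instead.\<close>

lemma del_table_modifies_high: "del_table m0 D \<Longrightarrow> modifies S m0 m \<Longrightarrow> S \<subseteq> {..<40} \<union> {out_base..} \<Longrightarrow> del_table m D"
proof -
  assume a: "del_table m0 D" "modifies S m0 m" "S \<subseteq> {..<40} \<union> {out_base..}"
  have "m (del_base + (x * n + y)) = m0 (del_base + (x * n + y))" if "x < n" "y < n" for x y
  proof (rule modifies_outside[OF a(2)])
    have "x * n + y < n * n" using pair_index_less that .
    then show "del_base + (x * n + y) \<notin> S" using a(3) layout_bounds unfolding out_base_def by auto
  qed
  then show ?thesis using a(1) unfolding del_table_def by simp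
qed

definition record_choice :: "instr list" where
  "record_choice = [Sub 22 19 3, StoreI 33 22, Sub 23 3 19, Add 32 32 23, Add 14 14 3, Add 15 15 5, Add 16 16 4, Add 33 33 3]"

definition choices_prog :: com where
  "choices_prog = Seq (Blk [LoadC 32 0, LoadC 13 0, Add 13 13 4, LoadC 14 0, LoadC 22 0, Add 15 6 22, Add 16 8 22, LoadC 22 2, Add 33 9 22])
     (for_loop 3 13 12 (Seq choice_prog (Blk record_choice)))"

definition writes_choices :: "nat set" where "writes_choices = {12..<34} \<union> {out_base..}"

lemma writes_choices_subset: "writes_choices \<subseteq> {10..<40} \<union> {del_base..}" "writes_choices \<subseteq> {..<40} \<union> {out_base..}"
  using layout_bounds by (auto simp: writes_choices_def)

definition choices_inv :: "(nat \<Rightarrow> nat \<Rightarrow> bool) \<Rightarrow> (nat \<Rightarrow> nat) \<Rightarrow> nat \<Rightarrow> (nat \<Rightarrow> nat) \<Rightarrow> bool" where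
  "choices_inv D m0 i m \<longleftrightarrow> modifies writes_choices m0 m \<and> m 14 = i \<and> m 15 = pref_base + i * n * n
     \<and> m 16 = del_base + i * n \<and> m 33 = out_base + 2 + i
     \<and> (m 32 = 0 \<longleftrightarrow> (\<forall>b<i. best_choice pref D b n \<noteq> 0)) \<and> (\<forall>b<i. m (out_base + 2 + b) = best_choice pref D b n - 1)"

lemma record_choice_spec:
  assumes h: "choices_inv D m0 i m1 \<and> m1 13 = n - i \<and> m1 3 = 1" and bs: "layout_ok m1"
  shows "hoare (\<lambda>m. modifies writes_choice m1 m \<and> m 19 = best_choice pref D i n) (Blk record_choice) 8
    (\<lambda>m. choices_inv D m0 (Suc i) m \<and> m 13 = n - i \<and> m 3 = 1)"
proof (rule hoare_Blk)
  fix m2 assume h2: "modifies writes_choice m1 m2 \<and> m2 19 = best_choice pref D i n"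
  define s where "s = best_choice pref D i n"
  have r: "\<And>r. r \<in> {3, 4, 5, 13, 14, 15, 16, 32, 33} \<Longrightarrow> m2 r = m1 r"
    by (rule modifies_outside[of writes_choice m1]) (use h2 in \<open>auto simp: writes_choice_def\<close>)
  have mem: "\<And>a. 40 \<le> a \<Longrightarrow> m2 a = m1 a"
    by (rule modifies_outside[of writes_choice m1]) (use h2 in \<open>auto simp: writes_choice_def\<close>)
  have bs2: "m2 3 = 1" "m2 4 = n" "m2 5 = n * n" using r bs by (auto simp: layout_ok_def)
  have ob40: "40 \<le> out_base" using layout_bounds by simp
  define m3 where "m3 = exec_block record_choice m2"
  have m3e: "m3 = m2(22 := s - 1, out_base + 2 + i := s - 1, 23 := 1 - s, 32 := m2 32 + (1 - s), 14 := Suc i,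
      15 := pref_base + i * n * n + n * n, 16 := del_base + i * n + n, 33 := out_base + 2 + i + 1)"
    unfolding m3_def record_choice_def using h2 r h bs2 ob40 by (simp add: choices_inv_def s_def)
  have u: "modifies writes_choices m0 m3"
  proof -
    have "modifies writes_choices m1 m3"
      unfolding m3e using h2 modifies_trans[of writes_choices m1 m1 writes_choice m2] by (auto simp: writes_choices_def writes_choice_def)
    then show ?thesis using h modifies_trans[of writes_choices m0 m1 writes_choices m3] by (simp add: choices_inv_def)
  qed
  have w1: "\<forall>b<Suc i. m3 (out_base + 2 + b) = best_choice pref D b n - 1"
  proof (intro allI impI)
    fix b assume "b < Suc i"
    show "m3 (out_base + 2 + b) = best_choice pref D b n - 1"
    proof (cases "b = i")
      case True then show ?thesis unfolding m3e s_def using ob40 by simp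
    next
      case False
      then have "b < i" using \<open>b < Suc i\<close> by simp
      then show ?thesis unfolding m3e using ob40 False mem[of "out_base + 2 + b"] h by (simp add: choices_inv_def)
    qed
  qed
  have w2: "m3 32 = 0 \<longleftrightarrow> (\<forall>b<Suc i. best_choice pref D b n \<noteq> 0)"
    unfolding m3e using h r ob40 by (auto simp: choices_inv_def s_def less_Suc_eq)
  show "choices_inv D m0 (Suc i) (exec_block record_choice m2) \<and> exec_block record_choice m2 13 = n - i \<and> exec_block record_choice m2 3 = 1"
    unfolding m3_def[symmetric] using u w1 w2 ob40 r h bs2 unfolding m3e by (simp add: choices_inv_def algebra_simps)
qed (simp add: record_choice_def)+

lemma choices_prog_spec:
  assumes m0: "layout_ok m0" "del_table m0 D"
  shows "hoare (\<lambda>m. m = m0) choices_prog (45 * Suc n ^ 2) (\<lambda>m. modifies writes_choices m0 m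
    \<and> (\<forall>b<n. m (out_base + 2 + b) = best_choice pref D b n - 1) \<and> (m 32 = 0 \<longleftrightarrow> (\<forall>b<n. best_choice pref D b n \<noteq> 0)))"
proof -
  have m03: "m0 3 = 1" "m0 4 = n" "m0 6 = pref_base" "m0 8 = del_base" "m0 9 = out_base" using m0(1) by (auto simp: layout_ok_def)
  have init: "hoare (\<lambda>m. m = m0) (Blk [LoadC 32 0, LoadC 13 0, Add 13 13 4, LoadC 14 0, LoadC 22 0, Add 15 6 22, Add 16 8 22, LoadC 22 2, Add 33 9 22]) 9
     (\<lambda>m. choices_inv D m0 0 m \<and> m 13 = n \<and> m 3 = 1)"
    by (rule hoare_Blk) (auto simp: choices_inv_def writes_choices_def m03)
  have body: "hoare (\<lambda>m. choices_inv D m0 i m \<and> m 13 = n - i \<and> m 3 = 1) (Seq choice_prog (Blk record_choice)) (16 + 16 * n)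
      (\<lambda>m. choices_inv D m0 (Suc i) m \<and> m 13 = n - i \<and> m 3 = 1)" if i: "i < n" for i
  proof (rule hoare_pointwise)
    fix m1 assume h: "choices_inv D m0 i m1 \<and> m1 13 = n - i \<and> m1 3 = 1"
    have bs: "layout_ok m1" by (rule layout_ok_modifies[OF m0(1) _ writes_choices_subset(1)]) (use h in \<open>simp add: choices_inv_def\<close>)
    have dm: "del_table m1 D" by (rule del_table_modifies_high[OF m0(2) _ writes_choices_subset(2)]) (use h in \<open>simp add: choices_inv_def\<close>)
    show "hoare (\<lambda>m. m = m1) (Seq choice_prog (Blk record_choice)) (16 + 16 * n) (\<lambda>m. choices_inv D m0 (Suc i) m \<and> m 13 = n - i \<and> m 3 = 1)"
      by (rule hoare_Seq_le[OF choice_prog_spec[OF i bs dm] record_choice_spec[OF h bs]])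
        (use h in \<open>auto simp: choices_inv_def\<close>)
  qed simp
  have loop: "hoare (\<lambda>m. choices_inv D m0 0 m \<and> m 13 = n \<and> m 3 = 1) (for_loop 3 13 12 (Seq choice_prog (Blk record_choice)))
      (36 * Suc n ^ 2) (\<lambda>m. choices_inv D m0 n m \<and> m 3 = 1)"
  proof (rule hoare_for_loop[OF _ _ _ body])
    show "\<And>i m v w. choices_inv D m0 i m \<Longrightarrow> choices_inv D m0 i (m(13 := v, 12 := w))"
      using layout_bounds by (simp add: choices_inv_def writes_choices_def)
    show "1 + n * (16 + 16 * n + 3) \<le> 36 * Suc n ^ 2"
      by (simp add: power2_eq_square algebra_simps)
  qed auto
  show ?thesis unfolding choices_prog_def
    by (rule hoare_Seq_le[OF init hoare_conseq[OF loop]]) (auto simp: choices_inv_def)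
qed

definition header_blk :: "instr list" where
  "header_blk = [Add 22 4 3, StoreI 9 22, LoadC 22 1, Add 23 9 3, StoreI 23 22, Sub 37 3 32]"

definition output_prog :: com where
  "output_prog = Seq choices_prog (Seq (Blk header_blk) (Seq (IfNZ 32 (Blk [LoadC 1 0, LoadC 0 1])) (IfNZ 37 copy_out)))"

definition out_buffer :: "(nat \<Rightarrow> nat \<Rightarrow> bool) \<Rightarrow> nat \<Rightarrow> nat" where
  "out_buffer D j = (if j = 0 then n + 1 else if j = 1 then 1 else best_choice pref D (j - 2) n - 1)"

definition buffer_ready :: "(nat \<Rightarrow> nat \<Rightarrow> bool) \<Rightarrow> (nat \<Rightarrow> nat) \<Rightarrow> bool" where
  "buffer_ready D m \<longleftrightarrow> m 4 = n \<and> m 3 = 1 \<and> m 9 = out_base \<and> (\<forall>j\<le>n+1. m (out_base + j) = out_buffer D j)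
     \<and> m 37 = 1 - m 32 \<and> (m 32 = 0 \<longleftrightarrow> (\<forall>b<n. best_choice pref D b n \<noteq> 0))"

lemma header_blk_spec:
  assumes m0: "layout_ok m0"
  shows "hoare (\<lambda>m. modifies writes_choices m0 m \<and> (\<forall>b<n. m (out_base + 2 + b) = best_choice pref D b n - 1)
      \<and> (m 32 = 0 \<longleftrightarrow> (\<forall>b<n. best_choice pref D b n \<noteq> 0))) (Blk header_blk) 6 (buffer_ready D)"
proof (rule hoare_Blk)
  fix m assume h: "modifies writes_choices m0 m \<and> (\<forall>b<n. m (out_base + 2 + b) = best_choice pref D b n - 1)
      \<and> (m 32 = 0 \<longleftrightarrow> (\<forall>b<n. best_choice pref D b n \<noteq> 0))"
  have "layout_ok m" by (rule layout_ok_modifies[OF m0 _ writes_choices_subset(1)]) (use h in simp)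
  then have r: "m 3 = 1" "m 4 = n" "m 9 = out_base" by (auto simp: layout_ok_def)
  have ob40: "40 \<le> out_base" using layout_bounds by simp
  let ?m' = "m(22 := 1, out_base := n + 1, 23 := out_base + 1, out_base + 1 := 1, 37 := 1 - m 32)"
  have step: "exec_block header_blk m = ?m'"
    using r ob40 by (simp add: header_blk_def fun_upd_twist)
  have "?m' (out_base + j) = out_buffer D j" if "j \<le> n + 1" for j
  proof (cases "j \<le> 1")
    case True then show ?thesis using ob40 by (auto simp: out_buffer_def le_Suc_eq)
  next
    case False
    then have "j - 2 < n" "out_base + j = out_base + 2 + (j - 2)" using that by auto
    then show ?thesis using h False ob40 by (auto simp: out_buffer_def)
  qed
  then show "buffer_ready D (exec_block header_blk m)"
    unfolding step buffer_ready_def using r h ob40 by simp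
qed (simp add: header_blk_def)+

lemma write_answer_spec:
  "hoare (buffer_ready D) (Seq (IfNZ 32 (Blk [LoadC 1 0, LoadC 0 1])) (IfNZ 37 copy_out)) (13 + 8 * n)
    (\<lambda>m. map (\<lambda>i. m (Suc i)) [0..<m 0] = choice_output n pref D)"
proof -
  define Q where "Q m \<longleftrightarrow> (m 37 = 0 \<and> m 0 = 1 \<and> m 1 = 0 \<and> (\<exists>b<n. best_choice pref D b n = 0)) \<or>
      (m 37 \<noteq> 0 \<and> m 4 = n \<and> m 3 = 1 \<and> m 9 = out_base \<and> (\<forall>j\<le>n+1. m (out_base + j) = out_buffer D j)
        \<and> (\<forall>b<n. best_choice pref D b n \<noteq> 0))" for m
  have ob3: "n + 3 < out_base"
  proof -
    have "n \<le> n * n" by (cases n) auto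
    then show ?thesis
      unfolding out_base_def del_base_def R_base_def pref_base_def base_def input_len_def by linarith
  qed
  have reject: "hoare (buffer_ready D) (IfNZ 32 (Blk [LoadC 1 0, LoadC 0 1])) 3 Q"
    by (rule hoare_IfNZ[OF hoare_Blk]) (auto simp: buffer_ready_def Q_def)
  have accept: "hoare Q (IfNZ 37 copy_out) (10 + 8 * n) (\<lambda>m. map (\<lambda>i. m (Suc i)) [0..<m 0] = choice_output n pref D)"
  proof (rule hoare_IfNZ)
    show "hoare (\<lambda>m. Q m \<and> m 37 \<noteq> 0) copy_out (9 + 8 * n) (\<lambda>m. map (\<lambda>i. m (Suc i)) [0..<m 0] = choice_output n pref D)"
    proof (cases "\<forall>b<n. best_choice pref D b n \<noteq> 0")
      case True
      show ?thesis
      proof (rule hoare_conseq[OF copy_out_spec[of "out_buffer D" n out_base]])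
        fix m assume h: "m 0 = n + 1 \<and> (\<forall>j. 1 \<le> j \<and> j \<le> n + 1 \<longrightarrow> m j = out_buffer D j)"
        have "map (\<lambda>i. m (Suc i)) [0..<Suc n] = map (\<lambda>i. out_buffer D (Suc i)) [0..<Suc n]"
          using h by (intro map_cong) auto
        also have "\<dots> = 1 # map (\<lambda>b. best_choice pref D b n - 1) [0..<n]"
          by (simp add: out_buffer_def map_upt_Suc del: upt_Suc)
        finally show "map (\<lambda>i. m (Suc i)) [0..<m 0] = choice_output n pref D"
          using h True by (simp add: choice_output_def)
      qed (auto simp: out_buffer_def ob3 Q_def)
    qed (auto simp: hoare_def Q_def)
  qed (auto simp: Q_def choice_output_def)
  show ?thesis by (rule hoare_Seq_le[OF reject accept]) simp
qed

lemma output_prog_spec: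
  assumes m0: "layout_ok m0" "del_table m0 D"
  shows "hoare (\<lambda>m. m = m0) output_prog (64 * Suc n ^ 2)
    (\<lambda>m. map (\<lambda>i. m (Suc i)) [0..<m 0] = choice_output n pref D)"
  unfolding output_prog_def
  by (rule hoare_Seq_le[OF choices_prog_spec[OF m0] hoare_Seq[OF header_blk_spec[OF m0(1)] write_answer_spec]])
    (simp add: power2_eq_square algebra_simps)

section \<open>Loading the input\<close>

definition setup_prog :: com where
  "setup_prog = Seq (Blk [LoadC 3 1, Sub 22 1 0, Add 23 22 3, LoadI 4 23, Add 6 23 3, LoadC 5 0, LoadC 34 0, Add 34 34 4])
    (Seq (for_loop 3 34 12 (Blk [Add 5 5 4]))
    (Seq (Blk [LoadC 36 0, LoadC 34 0, Add 34 34 4])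
    (Seq (for_loop 3 34 12 (Blk [Add 36 36 5])) (Blk [Add 7 6 36, Add 8 7 36, Add 9 8 5]))))"

definition writes_setup :: "nat set" where "writes_setup = {3..<40}"

lemma setup_prog_spec:
  assumes h: "m1 1 - m1 0 = base" "m1 (base + 1) = n" "input_loaded m1" "\<forall>a. del_base \<le> a \<longrightarrow> m1 a = 0"
  shows "hoare (\<lambda>m. m = m1) setup_prog (16 + 8 * n) (\<lambda>m. layout_ok m \<and> del_table m (\<lambda>_ _. False))"
proof -
  have b40: "40 \<le> base" by (simp add: base_def)
  define I1 where "I1 i m = (modifies writes_setup m1 m \<and> m 4 = n \<and> m 6 = pref_base \<and> m 5 = i * n)" for i m
  define I2 where "I2 i m = (modifies writes_setup m1 m \<and> m 4 = n \<and> m 6 = pref_base \<and> m 5 = n * n \<and> m 36 = i * (n * n))" for i m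
  have s1: "hoare (\<lambda>m. m = m1) (Blk [LoadC 3 1, Sub 22 1 0, Add 23 22 3, LoadI 4 23, Add 6 23 3, LoadC 5 0, LoadC 34 0, Add 34 34 4]) 8
     (\<lambda>m. I1 0 m \<and> m 34 = n \<and> m 3 = 1)"
    by (rule hoare_Blk) (use h b40 in \<open>auto simp: I1_def writes_setup_def pref_base_def\<close>)
  have s2: "hoare (\<lambda>m. I1 0 m \<and> m 34 = n \<and> m 3 = 1) (for_loop 3 34 12 (Blk [Add 5 5 4])) (1 + n * 4) (\<lambda>m. I1 n m \<and> m 3 = 1)"
  proof (rule hoare_for_loop)
    show "\<And>i. i < n \<Longrightarrow> hoare (\<lambda>m. I1 i m \<and> m 34 = n - i \<and> m 3 = 1) (Blk [Add 5 5 4]) 1 (\<lambda>m. I1 (Suc i) m \<and> m 34 = n - i \<and> m 3 = 1)"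
      by (rule hoare_Blk) (auto simp: I1_def writes_setup_def)
    show "\<And>i m v w. I1 i m \<Longrightarrow> I1 i (m(34 := v, 12 := w))" by (simp add: I1_def writes_setup_def)
  qed auto
  have s3: "hoare (\<lambda>m. I1 n m \<and> m 3 = 1) (Blk [LoadC 36 0, LoadC 34 0, Add 34 34 4]) 3 (\<lambda>m. I2 0 m \<and> m 34 = n \<and> m 3 = 1)"
    by (rule hoare_Blk) (auto simp: I1_def I2_def writes_setup_def algebra_simps)
  have s4: "hoare (\<lambda>m. I2 0 m \<and> m 34 = n \<and> m 3 = 1) (for_loop 3 34 12 (Blk [Add 36 36 5])) (1 + n * 4) (\<lambda>m. I2 n m \<and> m 3 = 1)"
  proof (rule hoare_for_loop)
    show "\<And>i. i < n \<Longrightarrow> hoare (\<lambda>m. I2 i m \<and> m 34 = n - i \<and> m 3 = 1) (Blk [Add 36 36 5]) 1 (\<lambda>m. I2 (Suc i) m \<and> m 34 = n - i \<and> m 3 = 1)"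
      by (rule hoare_Blk) (auto simp: I2_def writes_setup_def)
    show "\<And>i m v w. I2 i m \<Longrightarrow> I2 i (m(34 := v, 12 := w))" by (simp add: I2_def writes_setup_def)
  qed auto
  have s5: "hoare (\<lambda>m. I2 n m \<and> m 3 = 1) (Blk [Add 7 6 36, Add 8 7 36, Add 9 8 5]) 3 (\<lambda>m. layout_ok m \<and> del_table m (\<lambda>_ _. False))"
  proof (rule hoare_Blk)
    fix m assume a: "I2 n m \<and> m 3 = 1"
    define m' where "m' = exec_block [Add 7 6 36, Add 8 7 36, Add 9 8 5] m"
    have u: "modifies writes_setup m1 m'" using a by (simp add: m'_def I2_def writes_setup_def)
    have "input_loaded m'" by (rule input_loaded_modifies[OF h(3) u]) (auto simp: writes_setup_def)
    moreover have "del_table m' (\<lambda>_ _. False)"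
    proof -
      have "m' (del_base + (x * n + y)) = m1 (del_base + (x * n + y))" for x y
        by (rule modifies_outside[OF u]) (use layout_bounds in \<open>auto simp: writes_setup_def\<close>)
      then show ?thesis using h(4) by (simp add: del_table_def bit_def)
    qed
    moreover have "m' 3 = 1 \<and> m' 4 = n \<and> m' 5 = n * n \<and> m' 6 = pref_base \<and> m' 7 = R_base \<and> m' 8 = del_base \<and> m' 9 = out_base"
      using a by (simp add: m'_def I2_def R_base_def del_base_def out_base_def algebra_simps)
    ultimately show "layout_ok (exec_block [Add 7 6 36, Add 8 7 36, Add 9 8 5] m) \<and> del_table (exec_block [Add 7 6 36, Add 8 7 36, Add 9 8 5] m) (\<lambda>_ _. False)"
      unfolding m'_def[symmetric] by (simp add: layout_ok_def)
  qed auto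
  show ?thesis unfolding setup_prog_def
    by (rule hoare_Seq_le[OF s1 hoare_Seq[OF s2 hoare_Seq[OF s3 hoare_Seq[OF s4 s5]]]]) simp
qed

end

section \<open>The complete program\<close>

definition smg_prog :: com where
  "smg_prog = Seq relocate (Seq smg_asym.setup_prog (Seq smg_asym.elimination_prog smg_asym.output_prog))"

context smg_asym begin

lemma encode_smg_length: "length (encode_smg n pref R) = input_len"
  by (simp add: length_encode_smg input_len_def)

definition relocated :: "(nat \<Rightarrow> nat) \<Rightarrow> bool" where
  "relocated m \<longleftrightarrow> m 1 - m 0 = base
     \<and> (\<forall>a. 3 \<le> a \<and> a \<le> input_len \<longrightarrow> m (base + a) = encode_smg n pref R ! (a - 1))
     \<and> m (base + 1) = n \<and> m (base + 2) = 0 \<and> (\<forall>a. base + input_len < a \<longrightarrow> m a = 0)"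

lemma relocate_input:
  "hoare (\<lambda>m. m = snd (init_config (encode_smg n pref R))) relocate (10 + 8 * input_len) relocated"
proof -
  define mi where "mi = snd (init_config (encode_smg n pref R))"
  have L1: "1 \<le> input_len" by (simp add: input_len_def)
  have mi0: "mi 0 = input_len" and miz: "\<And>a. input_len < a \<Longrightarrow> mi a = 0"
    by (simp_all add: mi_def init_config_def encode_smg_length)
  have mi1: "mi 1 = n" using L1 by (simp add: mi_def init_config_def encode_smg_length encode_smg_nth_0)
  have mie: "\<forall>a. 1 \<le> a \<and> a \<le> input_len \<longrightarrow> mi a = encode_smg n pref R ! (a - 1)"
    by (auto simp: mi_def init_config_def encode_smg_length)
  have base: "base = input_len + 41" by (simp add: base_def)
  show ?thesis unfolding mi_def[symmetric]
  proof (rule hoare_conseq[OF relocate_spec[of input_len mi, OF L1 mi0 miz]])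
    fix m assume m: "m 1 - m 0 = input_len + 41
      \<and> (\<forall>a. 3 \<le> a \<and> a \<le> input_len \<longrightarrow> m (input_len + 41 + a) = mi a)
      \<and> m (input_len + 41 + 1) = mi 1 \<and> m (input_len + 41) = input_len \<and> m (input_len + 41 + 2) = 0
      \<and> (\<forall>a. input_len + 41 + input_len < a \<longrightarrow> m a = 0)"
    have "m (base + a) = encode_smg n pref R ! (a - 1)" if "3 \<le> a" "a \<le> input_len" for a
      using m mie that unfolding base by simp
    then show "relocated m" using m mi1 unfolding relocated_def base by simp
  qed simp_all
qed

lemma input_loaded_relocated:
  assumes "relocated m"
  shows "input_loaded m"
  unfolding input_loaded_def
proof (intro conjI allI impI)
  fix b c d assume a: "b < n" "c < n" "d < n"
  define idx where "idx = b * n * n + c * n + d"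
  have il: "idx < n * n * n" using triple_index_less[OF a] idx_def by simp
  have e: "pref_base + idx = base + (2 + idx)" by (simp add: pref_base_def)
  show "m (pref_base + (b * n * n + c * n + d)) = bit (pref b c d)"
  proof (cases "idx = 0")
    case True
    then have "b = 0" "c = 0" "d = 0" using a unfolding idx_def by auto
    then show ?thesis using assms[unfolded relocated_def] pref_irrefl[of 0 0] a True e unfolding idx_def by (simp add: bit_def)
  next
    case False
    have "2 + idx \<le> input_len" using il unfolding input_len_def by simp
    moreover have "3 \<le> 2 + idx" using False by simp
    ultimately have "m (base + (2 + idx)) = encode_smg n pref R ! (1 + idx)"
      using assms unfolding relocated_def by (auto dest!: spec[of _ "2 + idx"])
    then show ?thesis using e encode_smg_nth_pref[OF a] unfolding idx_def by simp
  qed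
next
  fix c x y assume a: "c < n" "x < n" "y < n"
  define idx where "idx = c * n * n + x * n + y"
  have il: "idx < n * n * n" using triple_index_less[OF a] idx_def by simp
  have "0 < n" using a by simp
  then have "0 < n * n * n" by simp
  then have n1: "1 \<le> n * n * n" by linarith
  have e: "R_base + idx = base + (2 + n * n * n + idx)" by (simp add: R_base_def pref_base_def)
  have "2 + n * n * n + idx \<le> input_len" using il unfolding input_len_def by simp
  moreover have "3 \<le> 2 + n * n * n + idx" using n1 by linarith
  ultimately have "m (base + (2 + n * n * n + idx)) = encode_smg n pref R ! (1 + n * n * n + idx)"
    using assms unfolding relocated_def by (auto dest!: spec[of _ "2 + n * n * n + idx"])
  then show "m (R_base + (c * n * n + x * n + y)) = bit (R c x y)" using e encode_smg_nth_R[OF a] unfolding idx_def by (simp add: add.assoc)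
qed

lemma setup_after_relocate:
  "hoare relocated setup_prog (16 + 8 * n) (\<lambda>m. layout_ok m \<and> del_table m (\<lambda>_ _. False))"
proof (rule hoare_pointwise[OF setup_prog_spec])
  have "del_base = base + input_len + 1" by (simp add: del_base_def R_base_def pref_base_def input_len_def)
  then show "\<forall>a. del_base \<le> a \<longrightarrow> m a = 0" if "relocated m" for m
    using that unfolding relocated_def by auto
qed (auto simp: relocated_def input_loaded_relocated)

lemma smg_prog_time_bound:
  "10 + 8 * input_len + (16 + 8 * n + (95 * Suc n ^ 5 + 64 * Suc n ^ 2)) \<le> 300 * Suc input_len ^ 5"
proof -
  have "n \<le> n * n * n" by (cases n) auto
  then have nL: "Suc n \<le> Suc input_len" unfolding input_len_def by linarith
  have p5: "Suc n ^ 5 \<le> Suc input_len ^ 5" using nL by (rule power_mono) simp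
  have p2: "Suc n ^ 2 \<le> Suc n ^ 5" by (rule power_increasing) auto
  have "Suc input_len ^ 1 \<le> Suc input_len ^ 5" by (rule power_increasing) auto
  then have "Suc input_len \<le> Suc input_len ^ 5" by simp
  then show ?thesis using nL p5 p2 by linarith
qed

lemma smg_prog_spec:
  "hoare (\<lambda>m. m = snd (init_config (encode_smg n pref R))) smg_prog (300 * Suc input_len ^ 5)
     (\<lambda>m. correct_output n pref R (map (\<lambda>i. m (Suc i)) [0..<m 0]))"
proof -
  have elim: "hoare (\<lambda>m. layout_ok m \<and> del_table m (\<lambda>_ _. False)) elimination_prog (95 * Suc n ^ 5)
      (\<lambda>m. layout_ok m \<and> del_table m (eliminated n pref R))"
  proof (rule hoare_pointwise[OF elimination_prog_spec])
    fix m1 m assume "layout_ok m1 \<and> del_table m1 (\<lambda>_ _. False)"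
      and "modifies writes_elimination m1 m \<and> del_table m (eliminated n pref R)"
    moreover have "writes_elimination \<subseteq> {10..<40} \<union> {del_base..}" by (auto simp: writes_elimination_def)
    ultimately show "layout_ok m \<and> del_table m (eliminated n pref R)"
      using layout_ok_modifies[of m1 writes_elimination m] by blast
  qed auto
  have write_output: "hoare (\<lambda>m. layout_ok m \<and> del_table m (eliminated n pref R)) output_prog (64 * Suc n ^ 2)
      (\<lambda>m. map (\<lambda>i. m (Suc i)) [0..<m 0] = choice_output n pref (eliminated n pref R))"
    by (rule hoare_pointwise[OF output_prog_spec]) auto
  show ?thesis unfolding smg_prog_def
    by (rule hoare_Seq_le[OF relocate_input hoare_Seq[OF setup_after_relocate hoare_Seq[OF elim hoare_conseq[OF write_output]]]])
      (use choice_output_eliminated_correct smg_prog_time_bound in auto)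
qed

end

theorem theorem2:
  shows "\<exists>(prog :: instr list) (c :: nat) (k :: nat).
    \<forall>n pref R. smg_instance n pref R \<and> asymmetric_prefs n R \<longrightarrow>
      (\<exists>t \<le> c * (length (encode_smg n pref R) + 1) ^ k.
         halted prog (run prog t (init_config (encode_smg n pref R)))
         \<and> correct_output n pref R
             (output_of (run prog t (init_config (encode_smg n pref R)))))"
proof (rule exI[of _ "compile 0 smg_prog"], rule exI[of _ 300], rule exI[of _ 5], intro allI impI)
  fix n pref R assume "smg_instance n pref R \<and> asymmetric_prefs n R"
  then interpret smg_asym n pref R by unfold_locales auto
  let ?cf = "init_config (encode_smg n pref R)"
  obtain t m where run: "big_step smg_prog (snd ?cf) t m" and time: "t \<le> 300 * Suc input_len ^ 5"
    and out: "correct_output n pref R (map (\<lambda>i. m (Suc i)) [0..<m 0])"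
    using smg_prog_spec unfolding hoare_def by blast
  have "?cf = (0, snd ?cf)" by (simp add: init_config_def)
  then have "run (compile 0 smg_prog) t ?cf = (com_len smg_prog, m)"
    and "halted (compile 0 smg_prog) (com_len smg_prog, m)"
    using big_step_compiled[OF run] by simp_all
  moreover note encode_smg_length
  ultimately show "\<exists>t \<le> 300 * (length (encode_smg n pref R) + 1) ^ 5.
      halted (compile 0 smg_prog) (run (compile 0 smg_prog) t ?cf)
      \<and> correct_output n pref R (output_of (run (compile 0 smg_prog) t ?cf))"
    using time out by (intro exI[of _ t]) (simp add: output_of_def)
qed

end
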